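(* A binary relation $\succsim$ on $l_\infty$ satisfies Weak order, Monotonicity, Continuity, ICRP, Convexity, ISU and IFPIS if and only if there exists a unique nonempty convex weak$^\star$-compact set $D\subseteq pa(\mathbb N)\cap\Delta$ such that $$I(x)=\min_{\mu\in D}\langle x,\mu\rangle$$ is the unique constant equivalent representing $\succsim$.
   Context: $l_\infty$: real bounded sequences indexed by $\mathbb N$; $\theta\in\mathbb R$ also a constant sequence; $x\ge y$ coordinatewise. $ba(\mathbb N)$: norm dual of $l_\infty$, pairing $\langle x,\mu\rangle$, weak$^\star$ topology. $\Delta$: finitely additive probability measures on $2^{\mathbb N}$; $pa(\mathbb N)$: $\mu\in ba(\mathbb N)$ with $\mu(\{n\})=0$ for all $n$. A finite permutation is a bijection $\sigma:\mathbb N\to\mathbb N$ fixing all but finitely many points; $d_\sigma=(d_{\sigma(0)},d_{\sigma(1)},\dots)$. Constant equivalent: $I$ with $x\sim I(x)$, $x\succsim y\iff I(x)\ge I(y)$. Weak order: complete, transitive. Monotonicity: $x\ge y\Rightarrow x\succsim y$, $1\succ0$. Continuity: for $x\succsim y\succsim z$ the sets $\{\alpha\in[0,1]:\alpha x+(1-\alpha)z\succsim y\}$, $\{\alpha:y\succsim\alpha x+(1-\alpha)z\}$ are closed. ICRP: $x\succsim y\Rightarrow x+\theta\succsim y+\theta$. Convexity: $x\succsim\theta,y\succsim\theta\Rightarrow\lambda x+(1-\lambda)y\succsim\theta$. ISU: $x\succsim y$, $\alpha\ge0\Rightarrow\alpha x\succsim\alpha y$. IFPIS: for every finite permutation $\sigma$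 and $x,d\in l_\infty$, $x+d\succsim x$ implies $x+d_\sigma\succsim x$. *)

theory Defs
  imports "HOL-Analysis.Analysis"
begin

definition linf :: "(nat \<Rightarrow> real) set" where
  "linf = {x. bounded (range x)}"

definition const_seq :: "real \<Rightarrow> (nat \<Rightarrow> real)" where
  "const_seq \<theta> = (\<lambda>_. \<theta>)"

definition sup_norm :: "(nat \<Rightarrow> real) \<Rightarrow> real" where
  "sup_norm x = (SUP n. \<bar>x n\<bar>)"

text \<open>ba(N), the norm dual of l_infinity: bounded linear functionals on linf,
  normalised to be 0 outside linf (so each element has a canonical representative).
  The pairing <x, mu> is just mu x; the charge of A is mu (indicator A).\<close>
definition ba_N :: "((nat \<Rightarrow> real) \<Rightarrow> real) set" where
  "ba_N = {L. (\<forall>x\<in>linf. \<forall>y\<in>linf. L (\<lambda>n. x n + y n) = L x + L y)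
            \<and> (\<forall>c::real. \<forall>x\<in>linf. L (\<lambda>n. c * x n) = c * L x)
            \<and> (\<exists>B. \<forall>x\<in>linf. \<bar>L x\<bar> \<le> B * sup_norm x)
            \<and> (\<forall>x. x \<notin> linf \<longrightarrow> L x = 0)}"

definition Delta_N :: "((nat \<Rightarrow> real) \<Rightarrow> real) set" where
  "Delta_N = {L\<in>ba_N. (\<forall>A::nat set. L (indicator A) \<ge> 0) \<and> L (indicator UNIV) = 1}"

text \<open>pa(N): purely finitely additive in the sense mu({n}) = 0 for all n.\<close>
definition pa_N :: "((nat \<Rightarrow> real) \<Rightarrow> real) set" where
  "pa_N = {L\<in>ba_N. \<forall>n. L (indicator {n}) = 0}"

text \<open>The weak-star topology on ba(N) is the topology of pointwise convergence on linf;
  since elements of ba_N are 0 off linf, it is the subspace topology of the product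
  topology on the function type, so weak-star compactness is "compact".\<close>

definition convex_fun_set :: "((nat \<Rightarrow> real) \<Rightarrow> real) set \<Rightarrow> bool" where
  "convex_fun_set D \<longleftrightarrow> (\<forall>\<mu>\<in>D. \<forall>\<nu>\<in>D. \<forall>t::real. 0 \<le> t \<and> t \<le> 1 \<longrightarrow>
       (\<lambda>x. t * \<mu> x + (1 - t) * \<nu> x) \<in> D)"

definition weak_order :: "((nat \<Rightarrow> real) \<Rightarrow> (nat \<Rightarrow> real) \<Rightarrow> bool) \<Rightarrow> bool" where
  "weak_order R \<longleftrightarrow> (\<forall>x\<in>linf. \<forall>y\<in>linf. R x y \<or> R y x)
     \<and> (\<forall>x\<in>linf. \<forall>y\<in>linf. \<forall>z\<in>linf. R x y \<and> R y z \<longrightarrow> R x z)"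

definition monotonicity :: "((nat \<Rightarrow> real) \<Rightarrow> (nat \<Rightarrow> real) \<Rightarrow> bool) \<Rightarrow> bool" where
  "monotonicity R \<longleftrightarrow> (\<forall>x\<in>linf. \<forall>y\<in>linf. (\<forall>n. x n \<ge> y n) \<longrightarrow> R x y)
     \<and> R (const_seq 1) (const_seq 0) \<and> \<not> R (const_seq 0) (const_seq 1)"

definition continuity :: "((nat \<Rightarrow> real) \<Rightarrow> (nat \<Rightarrow> real) \<Rightarrow> bool) \<Rightarrow> bool" where
  "continuity R \<longleftrightarrow> (\<forall>x\<in>linf. \<forall>y\<in>linf. \<forall>z\<in>linf. R x y \<and> R y z \<longrightarrow>
       closed {\<alpha>\<in>{0..1}. R (\<lambda>n. \<alpha> * x n + (1 - \<alpha>) * z n) y}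
     \<and> closed {\<alpha>\<in>{0..1}. R y (\<lambda>n. \<alpha> * x n + (1 - \<alpha>) * z n)})"

definition ICRP :: "((nat \<Rightarrow> real) \<Rightarrow> (nat \<Rightarrow> real) \<Rightarrow> bool) \<Rightarrow> bool" where
  "ICRP R \<longleftrightarrow> (\<forall>x\<in>linf. \<forall>y\<in>linf. \<forall>\<theta>::real. R x y \<longrightarrow> R (\<lambda>n. x n + \<theta>) (\<lambda>n. y n + \<theta>))"

definition convexity :: "((nat \<Rightarrow> real) \<Rightarrow> (nat \<Rightarrow> real) \<Rightarrow> bool) \<Rightarrow> bool" where
  "convexity R \<longleftrightarrow> (\<forall>x\<in>linf. \<forall>y\<in>linf. \<forall>\<theta>::real. \<forall>t::real.
      R x (const_seq \<theta>) \<and> R y (const_seq \<theta>) \<and> 0 \<le> t \<and> t \<le> 1 \<longrightarrow>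
      R (\<lambda>n. t * x n + (1 - t) * y n) (const_seq \<theta>))"

definition ISU :: "((nat \<Rightarrow> real) \<Rightarrow> (nat \<Rightarrow> real) \<Rightarrow> bool) \<Rightarrow> bool" where
  "ISU R \<longleftrightarrow> (\<forall>x\<in>linf. \<forall>y\<in>linf. \<forall>\<alpha>::real. R x y \<and> \<alpha> \<ge> 0 \<longrightarrow>
      R (\<lambda>n. \<alpha> * x n) (\<lambda>n. \<alpha> * y n))"

definition finite_perm :: "(nat \<Rightarrow> nat) \<Rightarrow> bool" where
  "finite_perm \<sigma> \<longleftrightarrow> bij \<sigma> \<and> finite {n. \<sigma> n \<noteq> n}"

definition IFPIS :: "((nat \<Rightarrow> real) \<Rightarrow> (nat \<Rightarrow> real) \<Rightarrow> bool) \<Rightarrow> bool" where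
  "IFPIS R \<longleftrightarrow> (\<forall>\<sigma>. finite_perm \<sigma> \<longrightarrow> (\<forall>x\<in>linf. \<forall>d\<in>linf.
      R (\<lambda>n. x n + d n) x \<longrightarrow> R (\<lambda>n. x n + d (\<sigma> n)) x))"

definition constant_equivalent ::
  "((nat \<Rightarrow> real) \<Rightarrow> (nat \<Rightarrow> real) \<Rightarrow> bool) \<Rightarrow> ((nat \<Rightarrow> real) \<Rightarrow> real) \<Rightarrow> bool" where
  "constant_equivalent R I \<longleftrightarrow>
     (\<forall>x\<in>linf. R x (const_seq (I x)) \<and> R (const_seq (I x)) x)
   \<and> (\<forall>x\<in>linf. \<forall>y\<in>linf. R x y \<longleftrightarrow> I x \<ge> I y)"

end

theory Submission
  imports Defs
begin

text \<open>
  If \<open>D\<close> is a set of purely finitely additive probability charges on which every pairing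
  \<open>\<langle>x, \<mu>\<rangle>\<close> attains its minimum, the lower envelope of \<open>D\<close> is monotone, normalised, Lipschitz,
  translation equivariant, positively homogeneous, concave and, since pure charges ignore
  finitely many coordinates, invariant under finite permutations; these properties give the
  axioms.

  Conversely, continuity and connectedness of \<open>[0, 1]\<close> provide the constant equivalent \<open>I\<close>, and
  the axioms make it monotone, normalised, translation equivariant, positively homogeneous and
  superadditive.  Its core, the set of charges dominating \<open>I\<close>, is convex and weak* compact, and
  by Hahn--Banach every value \<open>I x\<close> is attained on it.  As \<open>I\<close> is unchanged when mass is moved
  between coordinates, \<open>(r + 1) * I (- indicator {n}) \<ge> -1\<close> for every \<open>r\<close>, so every charge in
  the core vanishes on singletons.  Finally, a second representing set would be strictly
  separated from some point of the core by a bounded sequence, contradicting that both lower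
  envelopes equal \<open>I\<close>.
\<close>

section \<open>Bounded sequences\<close>

lemma linf_iff: "x \<in> linf \<longleftrightarrow> (\<exists>M. \<forall>n. \<bar>x n\<bar> \<le> M)"
  unfolding linf_def bounded_iff by (auto simp: real_norm_def)

lemma linfI: "(\<And>n. \<bar>x n\<bar> \<le> M) \<Longrightarrow> x \<in> linf"
  using linf_iff by blast

lemma linfE:
  assumes "x \<in> linf"
  obtains M where "\<And>n. \<bar>x n\<bar> \<le> M" "0 \<le> M"
  using assms unfolding linf_iff by (meson abs_ge_zero order_trans)

lemma linf_add: "x \<in> linf \<Longrightarrow> y \<in> linf \<Longrightarrow> (\<lambda>n. x n + y n) \<in> linf"
  by (elim linfE, rule linfI) (rule order_trans[OF abs_triangle_ineq add_mono])

lemma linf_mult: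
  assumes "x \<in> linf"
  shows "(\<lambda>n. c * x n) \<in> linf"
proof -
  obtain M where "\<And>n. \<bar>x n\<bar> \<le> M" using assms linfE by blast
  then show ?thesis by (intro linfI[of _ "\<bar>c\<bar> * M"]) (simp add: abs_mult mult_left_mono)
qed

lemma linf_uminus: "x \<in> linf \<Longrightarrow> (\<lambda>n. - x n) \<in> linf"
  using linf_mult[of x "-1"] by simp

lemma linf_diff: "x \<in> linf \<Longrightarrow> y \<in> linf \<Longrightarrow> (\<lambda>n. x n - y n) \<in> linf"
  using linf_add[OF _ linf_uminus] by simp

lemma linf_const: "(\<lambda>n. c) \<in> linf"
  by (rule linfI[of _ "\<bar>c\<bar>"]) simp

lemma linf_const_seq: "const_seq c \<in> linf"
  by (simp add: const_seq_def linf_const)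

lemma linf_indicator: "(indicator A :: nat \<Rightarrow> real) \<in> linf"
  by (rule linfI[of _ 1]) (simp add: indicator_def)

lemma linf_sum:
  "finite F \<Longrightarrow> (\<And>i. i \<in> F \<Longrightarrow> f i \<in> linf) \<Longrightarrow> (\<lambda>n. \<Sum>i\<in>F. f i n) \<in> linf"
  by (induction F rule: finite_induct) (auto intro: linf_add linf_const[of 0, simplified])

lemma linf_finite_range: "finite (range x) \<Longrightarrow> x \<in> linf"
  by (simp add: linf_def finite_imp_bounded)

lemma linf_comp: "x \<in> linf \<Longrightarrow> (\<lambda>n. x (\<sigma> n)) \<in> linf"
  by (metis linfE linfI)

lemma abs_le_sup_norm: "x \<in> linf \<Longrightarrow> \<bar>x n\<bar> \<le> sup_norm x"
  unfolding sup_norm_def by (rule cSUP_upper) (auto simp: bdd_above_def linf_iff)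

lemma sup_norm_le: "(\<And>n. \<bar>x n\<bar> \<le> M) \<Longrightarrow> sup_norm x \<le> M"
  unfolding sup_norm_def by (rule cSUP_least) auto

lemma sup_norm_nonneg: "x \<in> linf \<Longrightarrow> 0 \<le> sup_norm x"
  using abs_le_sup_norm[of x 0] by linarith

lemma sup_norm_uminus: "sup_norm (\<lambda>n. - x n) = sup_norm x"
  unfolding sup_norm_def by simp

lemma finite_range_decomp:
  fixes s :: "nat \<Rightarrow> real"
  assumes "finite (range s)"
  shows "s = (\<lambda>n. \<Sum>v\<in>range s. v * indicator {m. s m = v} n)"
proof
  fix n
  have "(\<Sum>v\<in>range s. v * indicator {m. s m = v} n) = (\<Sum>v\<in>range s. if v = s n then s n else 0)"
    by (rule sum.cong) (auto simp: indicator_def)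
  then show "s n = (\<Sum>v\<in>range s. v * indicator {m. s m = v} n)"
    using assms by simp
qed

lemma finite_support_decomp:
  fixes w :: "nat \<Rightarrow> real"
  assumes "finite F" and "\<And>n. n \<notin> F \<Longrightarrow> w n = 0"
  shows "w = (\<lambda>m. \<Sum>n\<in>F. w n * indicator {n} m)"
proof
  fix m
  have "(\<Sum>n\<in>F. w n * indicator {n} m) = (\<Sum>n\<in>F. if n = m then w m else 0)"
    by (rule sum.cong) (auto simp: indicator_def)
  then show "w m = (\<Sum>n\<in>F. w n * indicator {n} m)"
    using assms by auto
qed

section \<open>Linear functionals and charges\<close>

definition linf_linear :: "((nat \<Rightarrow> real) \<Rightarrow> real) \<Rightarrow> bool" where
  "linf_linear L \<longleftrightarrow> (\<forall>x\<in>linf. \<forall>y\<in>linf. L (\<lambda>n. x n + y n) = L x + L y)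
     \<and> (\<forall>c. \<forall>x\<in>linf. L (\<lambda>n. c * x n) = c * L x)"

lemma ba_N_linf_linear: "L \<in> ba_N \<Longrightarrow> linf_linear L"
  unfolding ba_N_def linf_linear_def by blast

lemma Delta_N_linf_linear: "L \<in> Delta_N \<Longrightarrow> linf_linear L"
  unfolding Delta_N_def by (auto intro: ba_N_linf_linear)

lemma pa_N_linf_linear: "L \<in> pa_N \<Longrightarrow> linf_linear L"
  unfolding pa_N_def by (auto intro: ba_N_linf_linear)

context
  fixes L
  assumes L: "linf_linear L"
begin

lemma linf_linear_add: "x \<in> linf \<Longrightarrow> y \<in> linf \<Longrightarrow> L (\<lambda>n. x n + y n) = L x + L y"
  using L unfolding linf_linear_def by blast

lemma linf_linear_mult: "x \<in> linf \<Longrightarrow> L (\<lambda>n. c * x n) = c * L x"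
  using L unfolding linf_linear_def by blast

lemma linf_linear_zero: "L (\<lambda>n. 0) = 0"
  using linf_linear_mult[of "\<lambda>n. 0" 0] linf_const[of 0] by simp

lemma linf_linear_uminus: "x \<in> linf \<Longrightarrow> L (\<lambda>n. - x n) = - L x"
  using linf_linear_mult[of x "-1"] by simp

lemma linf_linear_diff: "x \<in> linf \<Longrightarrow> y \<in> linf \<Longrightarrow> L (\<lambda>n. x n - y n) = L x - L y"
  using linf_linear_add[of x "\<lambda>n. - y n"] linf_linear_uminus[of y] linf_uminus[of y] by simp

lemma linf_linear_sum:
  "finite F \<Longrightarrow> (\<And>i. i \<in> F \<Longrightarrow> f i \<in> linf) \<Longrightarrow> L (\<lambda>n. \<Sum>i\<in>F. f i n) = (\<Sum>i\<in>F. L (f i))"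
  by (induction F rule: finite_induct) (auto simp: linf_linear_zero linf_linear_add linf_sum)

lemma linf_linear_sum_mult:
  "finite F \<Longrightarrow> (\<And>i. i \<in> F \<Longrightarrow> f i \<in> linf) \<Longrightarrow>
     L (\<lambda>n. \<Sum>i\<in>F. c i * f i n) = (\<Sum>i\<in>F. c i * L (f i))"
  by (subst linf_linear_sum) (auto intro: linf_mult simp: linf_linear_mult)

end

lemma Delta_N_const:
  assumes "L \<in> Delta_N"
  shows "L (\<lambda>n. c) = c"
proof -
  have "L (\<lambda>n. c * indicator UNIV n) = c * L (indicator UNIV)"
    by (rule linf_linear_mult[OF Delta_N_linf_linear[OF assms] linf_indicator])
  then show ?thesis using assms unfolding Delta_N_def by simp
qed

lemma Delta_N_nonneg_finite_range:
  assumes L: "L \<in> Delta_N" and fin: "finite (range s)" and pos: "\<And>n. 0 \<le> s n"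
  shows "0 \<le> L s"
proof -
  have "L s = (\<Sum>v\<in>range s. v * L (indicator {m. s m = v}))"
    by (subst finite_range_decomp[OF fin])
      (simp add: linf_linear_sum_mult[OF Delta_N_linf_linear[OF L] fin] linf_indicator)
  also have "\<dots> \<ge> 0"
    using L pos unfolding Delta_N_def by (auto intro!: sum_nonneg)
  finally show ?thesis .
qed

lemma ba_N_bound:
  assumes "L \<in> ba_N"
  obtains B where "0 \<le> B" "\<And>z. z \<in> linf \<Longrightarrow> \<bar>L z\<bar> \<le> B * sup_norm z"
proof -
  obtain B where B: "\<forall>z\<in>linf. \<bar>L z\<bar> \<le> B * sup_norm z"
    using assms unfolding ba_N_def by auto
  have "B * sup_norm z \<le> \<bar>B\<bar> * sup_norm z" if "z \<in> linf" for z
    by (rule mult_right_mono[OF abs_ge_self sup_norm_nonneg[OF that]])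
  then show ?thesis using B by (intro that[of "\<bar>B\<bar>"]) force+
qed

lemma linf_step_approx:
  assumes x: "x \<in> linf" and e: "0 < e"
  obtains s where "finite (range s)" "\<And>n. \<bar>x n - s n\<bar> \<le> e" "\<And>n. 0 \<le> x n \<Longrightarrow> 0 \<le> s n"
proof
  define s where "s = (\<lambda>n. e * of_int \<lfloor>x n / e\<rfloor>)"
  obtain M where M: "\<And>n. \<bar>x n\<bar> \<le> M" using x linfE by blast
  have "s n \<in> (\<lambda>j. e * of_int j) ` {\<lfloor>- M / e\<rfloor>..\<lfloor>M / e\<rfloor>}" for n
  proof -
    have "- M / e \<le> x n / e" "x n / e \<le> M / e"
      using M[of n] e divide_right_mono[of "- M" "x n" e] divide_right_mono[of "x n" M e]
      by (simp_all add: abs_le_iff)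
    then show ?thesis unfolding s_def by (intro imageI) (simp add: floor_mono)
  qed
  then have "range s \<subseteq> (\<lambda>j. e * of_int j) ` {\<lfloor>- M / e\<rfloor>..\<lfloor>M / e\<rfloor>}" by blast
  then show "finite (range s)" by (rule finite_subset) simp
  fix n
  have "of_int \<lfloor>x n / e\<rfloor> \<le> x n / e" "x n / e < of_int \<lfloor>x n / e\<rfloor> + 1"
    by linarith+
  then have "e * of_int \<lfloor>x n / e\<rfloor> \<le> e * (x n / e)" "e * (x n / e) \<le> e * (of_int \<lfloor>x n / e\<rfloor> + 1)"
    using e by (intro mult_left_mono; simp)+
  then show "\<bar>x n - s n\<bar> \<le> e"
    using e unfolding s_def by (simp add: algebra_simps abs_le_iff)
  show "0 \<le> x n \<Longrightarrow> 0 \<le> s n" using e unfolding s_def by simp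
qed

text \<open>Positivity on indicators extends to all nonnegative bounded sequences because
  they are uniform limits of nonnegative step functions and charges are norm-bounded.\<close>
lemma Delta_N_nonneg:
  assumes L: "L \<in> Delta_N" and x: "x \<in> linf" and pos: "\<And>n. 0 \<le> x n"
  shows "0 \<le> L x"
proof (rule field_le_epsilon)
  obtain B where B: "0 \<le> B" "\<And>z. z \<in> linf \<Longrightarrow> \<bar>L z\<bar> \<le> B * sup_norm z"
    using L unfolding Delta_N_def by (auto elim: ba_N_bound)
  fix \<epsilon> :: real assume "0 < \<epsilon>"
  define e where "e = \<epsilon> / (B + 1)"
  have e: "0 < e" "B * e \<le> \<epsilon>"
    unfolding e_def using \<open>0 < \<epsilon>\<close> B(1) by (auto simp: field_simps)
  obtain s where fin: "finite (range s)" and close: "\<And>n. \<bar>x n - s n\<bar> \<le> e"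
    and s_pos: "\<And>n. 0 \<le> s n"
    using linf_step_approx[OF x e(1)] pos by metis
  have s: "s \<in> linf" by (rule linf_finite_range[OF fin])
  have "0 \<le> L s" by (rule Delta_N_nonneg_finite_range[OF L fin s_pos])
  have "\<bar>L x - L s\<bar> = \<bar>L (\<lambda>n. x n - s n)\<bar>"
    using linf_linear_diff[OF Delta_N_linf_linear[OF L] x s] by simp
  also have "\<dots> \<le> B * sup_norm (\<lambda>n. x n - s n)" by (rule B(2)[OF linf_diff[OF x s]])
  also have "\<dots> \<le> B * e" by (intro mult_left_mono sup_norm_le close B(1))
  finally show "0 \<le> L x + \<epsilon>" using \<open>0 \<le> L s\<close> e(2) by linarith
qed

lemma Delta_N_mono:
  assumes "L \<in> Delta_N" "x \<in> linf" "y \<in> linf" "\<And>n. y n \<le> x n"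
  shows "L y \<le> L x"
  using Delta_N_nonneg[OF assms(1) linf_diff[OF assms(2,3)]] assms
    linf_linear_diff[OF Delta_N_linf_linear[OF assms(1)] assms(2,3)]
  by simp

lemma Delta_N_le_sup_norm: "L \<in> Delta_N \<Longrightarrow> x \<in> linf \<Longrightarrow> L x \<le> sup_norm x"
  using Delta_N_mono[of L "\<lambda>n. sup_norm x" x] Delta_N_const[of L] abs_le_sup_norm[of x] linf_const
  by (metis abs_le_D1)

lemma pa_N_finite_support:
  assumes L: "L \<in> pa_N" and z: "z \<in> linf" and fin: "finite F" and supp: "\<And>n. n \<notin> F \<Longrightarrow> w n = 0"
  shows "L (\<lambda>n. z n + w n) = L z"
proof -
  note lin = pa_N_linf_linear[OF L]
  have "range w \<subseteq> insert 0 (w ` F)" using supp by auto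
  then have w: "w \<in> linf"
    using fin by (intro linf_finite_range) (meson finite_imageI finite_insert finite_subset)
  have "L w = L (\<lambda>m. \<Sum>n\<in>F. w n * indicator {n} m)"
    using finite_support_decomp[OF fin supp] by (rule arg_cong)
  also have "\<dots> = (\<Sum>n\<in>F. w n * L (indicator {n}))"
    by (rule linf_linear_sum_mult[OF lin fin linf_indicator])
  also have "\<dots> = 0" using L unfolding pa_N_def by simp
  finally show ?thesis using linf_linear_add[OF lin z w] by simp
qed

section \<open>Preferences represented by a constant equivalent\<close>

context
  fixes R :: "(nat \<Rightarrow> real) \<Rightarrow> (nat \<Rightarrow> real) \<Rightarrow> bool" and J :: "(nat \<Rightarrow> real) \<Rightarrow> real"
  assumes ce: "constant_equivalent R J"
begin

lemma constant_equivalent_iff: "x \<in> linf \<Longrightarrow> y \<in> linf \<Longrightarrow> R x y \<longleftrightarrow> J y \<le> J x"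
  using ce unfolding constant_equivalent_def by blast

lemma weak_order_if_constant_equivalent: "weak_order R"
  unfolding weak_order_def using constant_equivalent_iff by (meson linear order_trans)

lemma monotonicity_if_constant_equivalent:
  assumes "\<And>c. J (const_seq c) = c"
    and "\<And>x y. x \<in> linf \<Longrightarrow> y \<in> linf \<Longrightarrow> (\<And>n. y n \<le> x n) \<Longrightarrow> J y \<le> J x"
  shows "monotonicity R"
  unfolding monotonicity_def
  using assms constant_equivalent_iff[OF linf_const_seq linf_const_seq] constant_equivalent_iff
  by (simp add: const_seq_def)

lemma continuity_if_constant_equivalent:
  assumes lip: "\<And>x y M. x \<in> linf \<Longrightarrow> y \<in> linf \<Longrightarrow> (\<And>n. \<bar>x n - y n\<bar> \<le> M) \<Longrightarrow> J y - M \<le> J x"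
  shows "continuity R"
  unfolding continuity_def
proof (intro ballI impI conjI)
  fix x y z assume xyz: "x \<in> linf" "y \<in> linf" "z \<in> linf"
  define mix where "mix = (\<lambda>\<alpha> n. \<alpha> * x n + (1 - \<alpha>) * z n)"
  have mix: "mix \<alpha> \<in> linf" for \<alpha>
    unfolding mix_def by (intro linf_add linf_mult xyz)
  obtain M where M: "\<And>n. \<bar>x n - z n\<bar> \<le> M" "0 \<le> M"
    using linf_diff[OF xyz(1,3)] linfE by blast
  have "M-lipschitz_on {0..1} (\<lambda>\<alpha>. J (mix \<alpha>))"
  proof (rule lipschitz_onI[OF _ M(2)])
    fix a b :: real
    have "\<bar>mix a n - mix b n\<bar> \<le> M * \<bar>a - b\<bar>" for n
    proof -
      have "mix a n - mix b n = (a - b) * (x n - z n)"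
        unfolding mix_def by (simp add: algebra_simps)
      then show ?thesis
        using mult_left_mono[OF M(1)[of n], of "\<bar>a - b\<bar>"] by (simp add: abs_mult mult.commute)
    qed
    then have "J (mix b) - M * \<bar>a - b\<bar> \<le> J (mix a)" "J (mix a) - M * \<bar>a - b\<bar> \<le> J (mix b)"
      by (intro lip mix; simp add: abs_minus_commute)+
    then show "dist (J (mix a)) (J (mix b)) \<le> M * dist a b"
      by (simp add: dist_real_def abs_le_iff)
  qed
  then have cont: "continuous_on {0..1} (\<lambda>\<alpha>. J (mix \<alpha>))"
    by (rule lipschitz_on_continuous_on)
  have "{\<alpha>\<in>{0..1}. R (mix \<alpha>) y} = {0..1} \<inter> (\<lambda>\<alpha>. J (mix \<alpha>)) -` {J y..}"
    "{\<alpha>\<in>{0..1}. R y (mix \<alpha>)} = {0..1} \<inter> (\<lambda>\<alpha>. J (mix \<alpha>)) -` {..J y}"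
    using constant_equivalent_iff[OF mix xyz(2)] constant_equivalent_iff[OF xyz(2) mix] by auto
  then show "closed {\<alpha>\<in>{0..1}. R (\<lambda>n. \<alpha> * x n + (1 - \<alpha>) * z n) y}"
    "closed {\<alpha>\<in>{0..1}. R y (\<lambda>n. \<alpha> * x n + (1 - \<alpha>) * z n)}"
    using continuous_closed_preimage[OF cont] unfolding mix_def by auto
qed

lemma ICRP_if_constant_equivalent:
  assumes "\<And>x \<theta>. x \<in> linf \<Longrightarrow> J (\<lambda>n. x n + \<theta>) = J x + \<theta>"
  shows "ICRP R"
  unfolding ICRP_def
proof (intro ballI allI impI)
  fix x y \<theta> assume "x \<in> linf" "y \<in> linf" "R x y"
  then show "R (\<lambda>n. x n + \<theta>) (\<lambda>n. y n + \<theta>)"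
    using assms constant_equivalent_iff linf_add[OF _ linf_const] by simp
qed

lemma ISU_if_constant_equivalent:
  assumes "\<And>x a. x \<in> linf \<Longrightarrow> 0 \<le> a \<Longrightarrow> J (\<lambda>n. a * x n) = a * J x"
  shows "ISU R"
  unfolding ISU_def
proof (intro ballI allI impI)
  fix x y and a :: real assume "x \<in> linf" "y \<in> linf" "R x y \<and> 0 \<le> a"
  then show "R (\<lambda>n. a * x n) (\<lambda>n. a * y n)"
    using assms constant_equivalent_iff linf_mult by (simp add: mult_left_mono)
qed

lemma convexity_if_constant_equivalent:
  assumes "\<And>c. J (const_seq c) = c"
    and "\<And>x y t. x \<in> linf \<Longrightarrow> y \<in> linf \<Longrightarrow> 0 \<le> t \<Longrightarrow> t \<le> 1 \<Longrightarrow>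
           t * J x + (1 - t) * J y \<le> J (\<lambda>n. t * x n + (1 - t) * y n)"
  shows "convexity R"
  unfolding convexity_def
proof (intro ballI allI impI)
  fix x y \<theta> and t :: real
  assume xy: "x \<in> linf" "y \<in> linf"
    and h: "R x (const_seq \<theta>) \<and> R y (const_seq \<theta>) \<and> 0 \<le> t \<and> t \<le> 1"
  then have "\<theta> \<le> J x" "\<theta> \<le> J y"
    using constant_equivalent_iff[OF _ linf_const_seq] assms(1) by auto
  then have "t * \<theta> + (1 - t) * \<theta> \<le> t * J x + (1 - t) * J y"
    using h by (intro add_mono mult_left_mono) auto
  then have "\<theta> \<le> t * J x + (1 - t) * J y"
    by (simp add: algebra_simps)
  also have "\<dots> \<le> J (\<lambda>n. t * x n + (1 - t) * y n)"
    using assms(2) h xy by blast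
  finally show "R (\<lambda>n. t * x n + (1 - t) * y n) (const_seq \<theta>)"
    using assms(1) xy constant_equivalent_iff[OF _ linf_const_seq] by (simp add: linf_add linf_mult)
qed

lemma IFPIS_if_constant_equivalent:
  assumes "\<And>\<sigma> x d. finite_perm \<sigma> \<Longrightarrow> x \<in> linf \<Longrightarrow> d \<in> linf \<Longrightarrow>
             J (\<lambda>n. x n + d (\<sigma> n)) = J (\<lambda>n. x n + d n)"
  shows "IFPIS R"
  unfolding IFPIS_def
proof (intro allI impI ballI)
  fix \<sigma> x d assume \<sigma>: "finite_perm \<sigma>" and x: "x \<in> linf" and d: "d \<in> linf"
    and R: "R (\<lambda>n. x n + d n) x"
  have "(\<lambda>n. x n + d n) \<in> linf" "(\<lambda>n. x n + d (\<sigma> n)) \<in> linf"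
    by (rule linf_add[OF x d], rule linf_add[OF x linf_comp[OF d]])
  then show "R (\<lambda>n. x n + d (\<sigma> n)) x"
    using R assms[OF \<sigma> x d] constant_equivalent_iff x by simp
qed

end

section \<open>Lower envelopes of sets of charges\<close>

definition lower_envelope :: "((nat \<Rightarrow> real) \<Rightarrow> real) set \<Rightarrow> (nat \<Rightarrow> real) \<Rightarrow> real" where
  "lower_envelope D x = (INF \<mu>\<in>D. \<mu> x)"

context
  fixes D :: "((nat \<Rightarrow> real) \<Rightarrow> real) set"
  assumes D_Delta: "D \<subseteq> Delta_N"
    and D_min: "\<forall>x\<in>linf. \<exists>\<mu>\<in>D. \<forall>\<nu>\<in>D. \<mu> x \<le> \<nu> x"
begin

lemma lower_envelope_attained:
  assumes "x \<in> linf"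
  shows "\<exists>\<mu>\<in>D. lower_envelope D x = \<mu> x"
proof -
  obtain \<mu> where "\<mu> \<in> D" "\<forall>\<nu>\<in>D. \<mu> x \<le> \<nu> x" using D_min assms by blast
  then have "lower_envelope D x = \<mu> x"
    unfolding lower_envelope_def by (intro cInf_eq_minimum) auto
  then show ?thesis using \<open>\<mu> \<in> D\<close> by blast
qed

lemma lower_envelope_le:
  assumes "x \<in> linf" "\<mu> \<in> D"
  shows "lower_envelope D x \<le> \<mu> x"
proof -
  obtain \<mu>\<^sub>0 where "\<forall>\<nu>\<in>D. \<mu>\<^sub>0 x \<le> \<nu> x" using D_min assms(1) by blast
  then have "bdd_below ((\<lambda>\<nu>. \<nu> x) ` D)" by (intro bdd_belowI2[of D "\<mu>\<^sub>0 x"]) auto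
  then show ?thesis unfolding lower_envelope_def using assms(2) by (rule cINF_lower)
qed

lemma le_lower_envelope:
  assumes "x \<in> linf" "\<And>\<mu>. \<mu> \<in> D \<Longrightarrow> c \<le> \<mu> x"
  shows "c \<le> lower_envelope D x"
proof -
  obtain \<mu> where "\<mu> \<in> D" "lower_envelope D x = \<mu> x"
    using lower_envelope_attained[OF assms(1)] by blast
  then show ?thesis using assms(2) by simp
qed

lemma lower_envelope_eqI:
  assumes "x \<in> linf" "y \<in> linf" "\<And>\<mu>. \<mu> \<in> D \<Longrightarrow> \<mu> x = \<mu> y"
  shows "lower_envelope D x = lower_envelope D y"
  using assms lower_envelope_le le_lower_envelope by (intro order_antisym) metis+

lemma lower_envelope_const: "lower_envelope D (\<lambda>n. c) = c"
  using lower_envelope_attained[OF linf_const] D_Delta Delta_N_const by fastforce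

lemma lower_envelope_mono:
  assumes x: "x \<in> linf" and y: "y \<in> linf" and le: "\<And>n. y n \<le> x n"
  shows "lower_envelope D y \<le> lower_envelope D x"
proof (rule le_lower_envelope[OF x])
  fix \<mu> assume "\<mu> \<in> D"
  then have "\<mu> y \<le> \<mu> x" using D_Delta Delta_N_mono[OF _ x y le] by blast
  then show "lower_envelope D y \<le> \<mu> x"
    using lower_envelope_le[OF y \<open>\<mu> \<in> D\<close>] by linarith
qed

lemma lower_envelope_lipschitz:
  assumes x: "x \<in> linf" and y: "y \<in> linf" and M: "\<And>n. \<bar>x n - y n\<bar> \<le> M"
  shows "lower_envelope D y - M \<le> lower_envelope D x"
proof (rule le_lower_envelope[OF x])
  fix \<mu> assume \<mu>: "\<mu> \<in> D"
  then have \<mu>_Delta: "\<mu> \<in> Delta_N" using D_Delta by blast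
  have "\<mu> y - \<mu> x = \<mu> (\<lambda>n. y n - x n)"
    using linf_linear_diff[OF Delta_N_linf_linear[OF \<mu>_Delta] y x] by simp
  also have "\<dots> \<le> sup_norm (\<lambda>n. y n - x n)"
    using Delta_N_le_sup_norm[OF \<mu>_Delta linf_diff[OF y x]] .
  also have "\<dots> \<le> M" by (rule sup_norm_le) (simp add: abs_minus_commute M)
  finally show "lower_envelope D y - M \<le> \<mu> x"
    using lower_envelope_le[OF y \<mu>] by simp
qed

lemma lower_envelope_add_const:
  assumes x: "x \<in> linf"
  shows "lower_envelope D (\<lambda>n. x n + \<theta>) = lower_envelope D x + \<theta>"
proof -
  have shift: "\<mu> (\<lambda>n. x n + \<theta>) = \<mu> x + \<theta>" if "\<mu> \<in> D" for \<mu>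
    using that D_Delta linf_linear_add[OF Delta_N_linf_linear x linf_const, of \<mu>] Delta_N_const by auto
  obtain \<mu> where \<mu>: "\<mu> \<in> D" "lower_envelope D x = \<mu> x" using lower_envelope_attained[OF x] by blast
  have "lower_envelope D x + \<theta> \<le> lower_envelope D (\<lambda>n. x n + \<theta>)"
  proof (rule le_lower_envelope[OF linf_add[OF x linf_const]])
    fix \<nu> assume "\<nu> \<in> D"
    then show "lower_envelope D x + \<theta> \<le> \<nu> (\<lambda>n. x n + \<theta>)"
      using shift[OF \<open>\<nu> \<in> D\<close>] lower_envelope_le[OF x \<open>\<nu> \<in> D\<close>] by simp
  qed
  moreover have "lower_envelope D (\<lambda>n. x n + \<theta>) \<le> lower_envelope D x + \<theta>"
    using lower_envelope_le[OF linf_add[OF x linf_const[of \<theta>]] \<mu>(1)] shift[OF \<mu>(1)] \<mu>(2) by simp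
  ultimately show ?thesis by simp
qed

lemma lower_envelope_mult:
  assumes x: "x \<in> linf" and a: "0 \<le> a"
  shows "lower_envelope D (\<lambda>n. a * x n) = a * lower_envelope D x"
proof -
  have scale: "\<mu> (\<lambda>n. a * x n) = a * \<mu> x" if "\<mu> \<in> D" for \<mu>
    using that D_Delta linf_linear_mult[OF Delta_N_linf_linear x, of \<mu>] by auto
  obtain \<mu> where \<mu>: "\<mu> \<in> D" "lower_envelope D x = \<mu> x" using lower_envelope_attained[OF x] by blast
  have "a * lower_envelope D x \<le> lower_envelope D (\<lambda>n. a * x n)"
    using scale lower_envelope_le[OF x] a
    by (intro le_lower_envelope[OF linf_mult[OF x]]) (metis mult_left_mono)
  moreover have "lower_envelope D (\<lambda>n. a * x n) \<le> a * lower_envelope D x"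
    using lower_envelope_le[OF linf_mult[OF x, of a] \<mu>(1)] scale[OF \<mu>(1)] \<mu>(2) by simp
  ultimately show ?thesis by simp
qed

lemma lower_envelope_concave:
  assumes x: "x \<in> linf" and y: "y \<in> linf" and t: "0 \<le> t" "t \<le> 1"
  shows "t * lower_envelope D x + (1 - t) * lower_envelope D y
    \<le> lower_envelope D (\<lambda>n. t * x n + (1 - t) * y n)"
proof (rule le_lower_envelope)
  show "(\<lambda>n. t * x n + (1 - t) * y n) \<in> linf" by (intro linf_add linf_mult x y)
next
  fix \<mu> assume \<mu>: "\<mu> \<in> D"
  then have lin: "linf_linear \<mu>" using D_Delta Delta_N_linf_linear by blast
  have "\<mu> (\<lambda>n. t * x n + (1 - t) * y n) = t * \<mu> x + (1 - t) * \<mu> y"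
    using linf_linear_add[OF lin linf_mult[OF x] linf_mult[OF y]]
      linf_linear_mult[OF lin x] linf_linear_mult[OF lin y] by simp
  then show "t * lower_envelope D x + (1 - t) * lower_envelope D y \<le> \<mu> (\<lambda>n. t * x n + (1 - t) * y n)"
    using lower_envelope_le[OF x \<mu>] lower_envelope_le[OF y \<mu>] t
    by (simp add: add_mono mult_left_mono)
qed

lemma lower_envelope_perm:
  assumes pa: "D \<subseteq> pa_N" and \<sigma>: "finite_perm \<sigma>" and x: "x \<in> linf" and d: "d \<in> linf"
  shows "lower_envelope D (\<lambda>n. x n + d (\<sigma> n)) = lower_envelope D (\<lambda>n. x n + d n)"
proof (rule lower_envelope_eqI)
  show "(\<lambda>n. x n + d (\<sigma> n)) \<in> linf" "(\<lambda>n. x n + d n) \<in> linf"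
    by (rule linf_add[OF x linf_comp[OF d]], rule linf_add[OF x d])
  fix \<mu> assume "\<mu> \<in> D"
  have "finite {n. \<sigma> n \<noteq> n}" using \<sigma> unfolding finite_perm_def by blast
  then have "\<mu> (\<lambda>n. (x n + d n) + (d (\<sigma> n) - d n)) = \<mu> (\<lambda>n. x n + d n)"
    using \<open>\<mu> \<in> D\<close> pa by (intro pa_N_finite_support linf_add[OF x d]) auto
  then show "\<mu> (\<lambda>n. x n + d (\<sigma> n)) = \<mu> (\<lambda>n. x n + d n)" by simp
qed

end

lemma axioms_if_lower_envelope_representation:
  assumes D: "D \<subseteq> pa_N \<inter> Delta_N" "\<forall>x\<in>linf. \<exists>\<mu>\<in>D. \<forall>\<nu>\<in>D. \<mu> x \<le> \<nu> x"
    and ce: "constant_equivalent R (lower_envelope D)"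
  shows "weak_order R \<and> monotonicity R \<and> continuity R \<and> ICRP R \<and> convexity R \<and> ISU R \<and> IFPIS R"
proof -
  have Delta: "D \<subseteq> Delta_N" and pa: "D \<subseteq> pa_N" using D(1) by auto
  note envelope = lower_envelope_const[OF Delta D(2), folded const_seq_def]
  show ?thesis
  proof (intro conjI)
    show "weak_order R" by (rule weak_order_if_constant_equivalent[OF ce])
    show "monotonicity R"
      by (rule monotonicity_if_constant_equivalent[OF ce envelope], rule lower_envelope_mono[OF Delta D(2)])
    show "continuity R"
      by (rule continuity_if_constant_equivalent[OF ce], rule lower_envelope_lipschitz[OF Delta D(2)])
    show "ICRP R"
      by (rule ICRP_if_constant_equivalent[OF ce], rule lower_envelope_add_const[OF Delta D(2)])
    show "convexity R"
      by (rule convexity_if_constant_equivalent[OF ce envelope], rule lower_envelope_concave[OF Delta D(2)])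
    show "ISU R"
      by (rule ISU_if_constant_equivalent[OF ce], rule lower_envelope_mult[OF Delta D(2)])
    show "IFPIS R"
      by (rule IFPIS_if_constant_equivalent[OF ce], rule lower_envelope_perm[OF Delta D(2) pa])
  qed
qed

section \<open>The constant equivalent of a preference satisfying the axioms\<close>

locale preference_axioms =
  fixes R :: "(nat \<Rightarrow> real) \<Rightarrow> (nat \<Rightarrow> real) \<Rightarrow> bool"
  assumes weak_order: "weak_order R" and monotonicity: "monotonicity R"
    and continuity: "continuity R" and ICRP: "ICRP R" and convexity: "convexity R"
    and ISU: "ISU R" and IFPIS: "IFPIS R"
begin

lemma R_total: "x \<in> linf \<Longrightarrow> y \<in> linf \<Longrightarrow> R x y \<or> R y x"
  using weak_order unfolding weak_order_def by blast

lemma R_trans: "x \<in> linf \<Longrightarrow> y \<in> linf \<Longrightarrow> z \<in> linf \<Longrightarrow> R x y \<Longrightarrow> R y z \<Longrightarrow> R x z"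
  using weak_order unfolding weak_order_def by blast

lemma R_mono: "x \<in> linf \<Longrightarrow> y \<in> linf \<Longrightarrow> (\<And>n. y n \<le> x n) \<Longrightarrow> R x y"
  using monotonicity unfolding monotonicity_def by blast

lemma R_add_const: "x \<in> linf \<Longrightarrow> y \<in> linf \<Longrightarrow> R x y \<Longrightarrow> R (\<lambda>n. x n + \<theta>) (\<lambda>n. y n + \<theta>)"
  using ICRP unfolding ICRP_def by blast

lemma R_mult: "x \<in> linf \<Longrightarrow> y \<in> linf \<Longrightarrow> R x y \<Longrightarrow> 0 \<le> a \<Longrightarrow> R (\<lambda>n. a * x n) (\<lambda>n. a * y n)"
  using ISU unfolding ISU_def by blast

lemma R_mix_const_seq:
  "x \<in> linf \<Longrightarrow> y \<in> linf \<Longrightarrow> R x (const_seq \<theta>) \<Longrightarrow> R y (const_seq \<theta>) \<Longrightarrow> 0 \<le> t \<Longrightarrow> t \<le> 1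
    \<Longrightarrow> R (\<lambda>n. t * x n + (1 - t) * y n) (const_seq \<theta>)"
  using convexity unfolding convexity_def by blast

lemma R_const_seq_iff: "R (const_seq a) (const_seq b) \<longleftrightarrow> b \<le> a"
proof
  assume "b \<le> a"
  then show "R (const_seq a) (const_seq b)"
    by (intro R_mono linf_const_seq) (simp add: const_seq_def)
next
  assume R_ab: "R (const_seq a) (const_seq b)"
  show "b \<le> a"
  proof (rule ccontr)
    assume "\<not> b \<le> a"
    have "R (\<lambda>n. const_seq a n + - a) (\<lambda>n. const_seq b n + - a)"
      by (rule R_add_const[OF linf_const_seq linf_const_seq R_ab])
    then have "R (\<lambda>n. 0) (\<lambda>n. b - a)" by (simp add: const_seq_def)
    then have "R (\<lambda>n. (1 / (b - a)) * 0) (\<lambda>n. (1 / (b - a)) * (b - a))"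
      by (rule R_mult[OF linf_const linf_const]) (use \<open>\<not> b \<le> a\<close> in simp)
    then have "R (const_seq 0) (const_seq 1)"
      using \<open>\<not> b \<le> a\<close> by (simp add: const_seq_def)
    then show False using monotonicity unfolding monotonicity_def by simp
  qed
qed

text \<open>Along the segment from \<open>const_seq M\<close> down to \<open>const_seq (-M)\<close> the sets of points
  above and below \<open>x\<close> are closed and cover \<open>[0, 1]\<close>, so by connectedness they meet.\<close>
lemma exists_constant_equivalent:
  assumes x: "x \<in> linf"
  shows "\<exists>c. R x (const_seq c) \<and> R (const_seq c) x"
proof -
  obtain M where M: "\<And>n. \<bar>x n\<bar> \<le> M" using x linfE by blast
  define mix where "mix = (\<lambda>\<alpha>::real. \<lambda>n. \<alpha> * const_seq M n + (1 - \<alpha>) * const_seq (- M) n)"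
  have mix_const: "mix \<alpha> = const_seq (\<alpha> * M + (1 - \<alpha>) * (- M))" for \<alpha>
    unfolding mix_def const_seq_def by simp
  have M': "- M \<le> x n \<and> x n \<le> M" for n using M[of n] by arith
  have top: "R (const_seq M) x" and bot: "R x (const_seq (- M))"
    by (rule R_mono[OF linf_const_seq x], simp add: const_seq_def M',
        rule R_mono[OF x linf_const_seq], simp add: const_seq_def M')
  define above where "above = {\<alpha>\<in>{0..1}. R (mix \<alpha>) x}"
  define below where "below = {\<alpha>\<in>{0..1}. R x (mix \<alpha>)}"
  have "closed above" "closed below"
    using continuity top bot x linf_const_seq unfolding continuity_def above_def below_def mix_def
    by blast+
  moreover have "{0..1} \<subseteq> above \<union> below"
    using R_total[OF _ x] linf_const_seq unfolding above_def below_def mix_const by auto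
  moreover have "1 \<in> above" "0 \<in> below"
    using top bot unfolding above_def below_def mix_const by simp_all
  ultimately have "above \<inter> below \<noteq> {}"
    using connected_Icc[of "0::real" 1] unfolding connected_closed
    by (metis (no_types, lifting) atLeastAtMost_iff disjoint_iff inf.absorb_iff2 le_sup_iff
        order.refl zero_le_one inf_commute)
  then show ?thesis unfolding above_def below_def mix_const by auto
qed

definition I :: "(nat \<Rightarrow> real) \<Rightarrow> real" where
  "I x = (SOME c. R x (const_seq c) \<and> R (const_seq c) x)"

lemma I_indifferent: "x \<in> linf \<Longrightarrow> R x (const_seq (I x)) \<and> R (const_seq (I x)) x"
  unfolding I_def by (rule someI_ex) (rule exists_constant_equivalent)

lemma I_const_seq: "I (const_seq c) = c"
  using I_indifferent[OF linf_const_seq, of c] R_const_seq_iff by (meson order_antisym)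

lemma I_const: "I (\<lambda>n. c) = c"
  using I_const_seq[of c] by (simp add: const_seq_def)

lemma R_iff_I: "x \<in> linf \<Longrightarrow> y \<in> linf \<Longrightarrow> R x y \<longleftrightarrow> I y \<le> I x"
  using I_indifferent R_trans R_const_seq_iff linf_const_seq by meson

lemma constant_equivalent_I: "constant_equivalent R I"
  unfolding constant_equivalent_def using I_indifferent R_iff_I by blast

lemma I_eqI: "z \<in> linf \<Longrightarrow> R z (const_seq c) \<Longrightarrow> R (const_seq c) z \<Longrightarrow> I z = c"
  using R_iff_I[OF _ linf_const_seq, of z c] R_iff_I[OF linf_const_seq, of z c] I_const_seq by auto

lemma constant_equivalent_unique: "constant_equivalent R J \<Longrightarrow> x \<in> linf \<Longrightarrow> J x = I x"
  unfolding constant_equivalent_def using I_eqI by (metis (no_types, lifting))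

lemma I_mono: "x \<in> linf \<Longrightarrow> y \<in> linf \<Longrightarrow> (\<And>n. y n \<le> x n) \<Longrightarrow> I y \<le> I x"
  using R_mono R_iff_I by blast

lemma I_add_const:
  assumes x: "x \<in> linf"
  shows "I (\<lambda>n. x n + \<theta>) = I x + \<theta>"
proof (rule I_eqI)
  show "(\<lambda>n. x n + \<theta>) \<in> linf" by (intro linf_add x linf_const)
  have "(\<lambda>n. const_seq (I x) n + \<theta>) = const_seq (I x + \<theta>)" by (simp add: const_seq_def)
  then show "R (\<lambda>n. x n + \<theta>) (const_seq (I x + \<theta>))" "R (const_seq (I x + \<theta>)) (\<lambda>n. x n + \<theta>)"
    using ICRP I_indifferent[OF x] x linf_const_seq unfolding ICRP_def by metis+
qed

lemma I_mult:
  assumes x: "x \<in> linf" and a: "0 \<le> a"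
  shows "I (\<lambda>n. a * x n) = a * I x"
proof (rule I_eqI)
  show "(\<lambda>n. a * x n) \<in> linf" by (intro linf_mult x)
  have "(\<lambda>n. a * const_seq (I x) n) = const_seq (a * I x)" by (simp add: const_seq_def)
  then show "R (\<lambda>n. a * x n) (const_seq (a * I x))" "R (const_seq (a * I x)) (\<lambda>n. a * x n)"
    using ISU I_indifferent[OF x] x a linf_const_seq unfolding ISU_def by metis+
qed

text \<open>Convexity only speaks about upper contour sets of constants; normalising \<open>x\<close> and \<open>y\<close>
  to constant equivalent \<open>0\<close> and using homogeneity turns it into superadditivity.\<close>
lemma I_superadd:
  assumes x: "x \<in> linf" and y: "y \<in> linf"
  shows "I x + I y \<le> I (\<lambda>n. x n + y n)"
proof -
  define u where "u = (\<lambda>n. x n + - I x)"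
  define v where "v = (\<lambda>n. y n + - I y)"
  define w where "w = (\<lambda>n. (1/2) * u n + (1 - 1/2) * v n)"
  have uv: "u \<in> linf" "v \<in> linf" unfolding u_def v_def by (intro linf_add x y linf_const)+
  have xy: "(\<lambda>n. x n + y n) \<in> linf" by (rule linf_add[OF x y])
  have "I u = 0" "I v = 0"
    using I_add_const[OF x, of "- I x"] I_add_const[OF y, of "- I y"] unfolding u_def v_def by simp_all
  then have "R u (const_seq 0)" "R v (const_seq 0)"
    using R_iff_I[OF _ linf_const_seq] uv I_const_seq by auto
  then have "R w (const_seq 0)"
    unfolding w_def by (rule R_mix_const_seq[OF uv]) simp_all
  moreover have "w \<in> linf" unfolding w_def by (intro linf_add linf_mult uv)
  ultimately have "0 \<le> I w" using R_iff_I[OF _ linf_const_seq] I_const_seq by simp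
  also have "w = (\<lambda>n. (1/2) * (x n + y n) + - ((I x + I y) / 2))"
    unfolding w_def u_def v_def by (auto simp: algebra_simps)
  also have "I \<dots> = I (\<lambda>n. (1/2) * (x n + y n)) + - ((I x + I y) / 2)"
    by (rule I_add_const[OF linf_mult[OF xy]])
  also have "I (\<lambda>n. (1/2) * (x n + y n)) = (1/2) * I (\<lambda>n. x n + y n)"
    by (rule I_mult[OF xy]) simp
  finally show ?thesis by simp
qed

lemma I_ge_neg_sup_norm:
  assumes x: "x \<in> linf"
  shows "- sup_norm x \<le> I x"
proof -
  have "I (\<lambda>n. - sup_norm x) \<le> I x"
    by (rule I_mono[OF x linf_const]) (metis abs_le_sup_norm[OF x] abs_le_D2 minus_le_iff)
  then show ?thesis by (simp add: I_const)
qed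

lemma I_perm_ge:
  assumes \<sigma>: "finite_perm \<sigma>" and x: "x \<in> linf" and d: "d \<in> linf"
  shows "I (\<lambda>n. x n + d n) \<le> I (\<lambda>n. x n + d (\<sigma> n))"
proof -
  define c where "c = I (\<lambda>n. x n + d n) - I x"
  define d' where "d' = (\<lambda>n. d n + - c)"
  have d': "d' \<in> linf" unfolding d'_def by (intro linf_add d linf_const)
  have xd: "(\<lambda>n. x n + d n) \<in> linf" "(\<lambda>n. x n + d (\<sigma> n)) \<in> linf"
    by (rule linf_add[OF x d], rule linf_add[OF x linf_comp[OF d]])
  have "(\<lambda>n. x n + d' n) = (\<lambda>n. (x n + d n) + - c)"
    unfolding d'_def by (simp add: algebra_simps)
  then have "I (\<lambda>n. x n + d' n) = I x" unfolding c_def using I_add_const[OF xd(1)] by simp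
  then have "R (\<lambda>n. x n + d' n) x" using R_iff_I[OF linf_add[OF x d'] x] by simp
  then have "R (\<lambda>n. x n + d' (\<sigma> n)) x"
    using IFPIS \<sigma> x d' unfolding IFPIS_def by blast
  moreover have "(\<lambda>n. x n + d' (\<sigma> n)) = (\<lambda>n. (x n + d (\<sigma> n)) + - c)"
    unfolding d'_def by (simp add: algebra_simps)
  ultimately have "I x \<le> I (\<lambda>n. x n + d (\<sigma> n)) - c"
    using R_iff_I[OF linf_add[OF xd(2) linf_const[of "- c"]] x] I_add_const[OF xd(2), of "- c"] by simp
  then show ?thesis unfolding c_def by simp
qed

lemma finite_perm_transpose: "finite_perm (Transposition.transpose a b)"
proof -
  have "{n. Transposition.transpose a b n \<noteq> n} \<subseteq> {a, b}"
    by (auto simp: Transposition.transpose_def)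
  then show ?thesis unfolding finite_perm_def by (auto intro: finite_subset)
qed

lemma I_move_mass:
  assumes z: "z \<in> linf"
  shows "I (\<lambda>m. z m + t * indicator {a} m) = I (\<lambda>m. z m + t * indicator {b} m)"
proof -
  have ind: "(\<lambda>m. t * indicator {c} m) \<in> linf" for c :: nat by (intro linf_mult linf_indicator)
  have swap: "(\<lambda>n. z n + t * indicator {c} (Transposition.transpose a b n))
      = (\<lambda>n. z n + t * indicator {Transposition.transpose a b c} n)" for c
    by (auto simp: indicator_def Transposition.transpose_def)
  have "I (\<lambda>n. z n + t * indicator {b} n) \<le> I (\<lambda>n. z n + t * indicator {b} (Transposition.transpose a b n))"
    "I (\<lambda>n. z n + t * indicator {a} n) \<le> I (\<lambda>n. z n + t * indicator {a} (Transposition.transpose a b n))"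
    by (rule I_perm_ge[OF finite_perm_transpose z ind])+
  then show ?thesis unfolding swap by simp
qed

text \<open>Mass \<open>-1\<close> at \<open>n\<close> can be spread over \<open>n, \<dots>, n + r\<close> without changing \<open>I\<close>; the spread-out
  vector is bounded below by \<open>-1\<close>, so \<open>(r + 1) I(-1_{n}) \<ge> -1\<close> for all \<open>r\<close>.\<close>
lemma I_spread_mass:
  "I (\<lambda>m. - (s * indicator {n} m) - indicator {n<..n + r} m) = I (\<lambda>m. - ((s + real r) * indicator {n} m))"
proof (induction r arbitrary: s)
  case 0
  then show ?case by simp
next
  case (Suc r)
  define z where "z = (\<lambda>m. - (s * indicator {n} m) - indicator {n<..n + r} m)"
  have z: "z \<in> linf" unfolding z_def by (intro linf_diff linf_uminus linf_mult linf_indicator)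
  have "(\<lambda>m. - (s * indicator {n} m) - indicator {n<..n + Suc r} m) = (\<lambda>m. z m + (-1) * indicator {Suc (n + r)} m)"
    unfolding z_def by (auto simp: indicator_def fun_eq_iff)
  then have "I (\<lambda>m. - (s * indicator {n} m) - indicator {n<..n + Suc r} m)
      = I (\<lambda>m. z m + (-1) * indicator {Suc (n + r)} m)" by (rule arg_cong)
  also have "\<dots> = I (\<lambda>m. z m + (-1) * indicator {n} m)" by (rule I_move_mass[OF z])
  also have "(\<lambda>m. z m + (-1) * indicator {n} m) = (\<lambda>m. - ((s + 1) * indicator {n} m) - indicator {n<..n + r} m)"
    unfolding z_def by (auto simp: indicator_def fun_eq_iff)
  also have "I \<dots> = I (\<lambda>m. - ((s + 1 + real r) * indicator {n} m))" by (rule Suc.IH)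
  finally show ?case by (simp add: ac_simps)
qed

lemma I_neg_indicator_nonneg: "0 \<le> I (\<lambda>m. - indicator {n} m)"
proof (rule ccontr)
  define c where "c = I (\<lambda>m. - indicator {n} m)"
  assume "\<not> 0 \<le> I (\<lambda>m. - indicator {n} m)"
  then have c: "c < 0" unfolding c_def by simp
  have bound: "- 1 \<le> c + real r * c" for r
  proof -
    have "I (\<lambda>m. - ((1 + real r) * indicator {n} m)) = (1 + real r) * c"
      using I_mult[OF linf_uminus[OF linf_indicator], of "1 + real r" "{n}"] unfolding c_def by simp
    moreover have "I (\<lambda>m. -1) \<le> I (\<lambda>m. - (1 * indicator {n} m) - indicator {n<..n + r} m)"
      by (rule I_mono[OF linf_diff[OF linf_uminus[OF linf_mult[OF linf_indicator]] linf_indicator] linf_const])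
        (simp add: indicator_def)
    ultimately show ?thesis using I_spread_mass[of 1 n r] I_const by (simp add: algebra_simps)
  qed
  obtain r :: nat where "1 / (- c) < real r" using reals_Archimedean2 by blast
  then have "real r * c < - 1" using c by (simp add: field_simps)
  then show False using bound[of r] c by linarith
qed

end

section \<open>A Hahn--Banach theorem on bounded sequences\<close>

lemma le_INF_add_INF:
  fixes f g :: "'a \<Rightarrow> real"
  assumes "A \<noteq> {}" "B \<noteq> {}" "bdd_below (f ` A)" "bdd_below (g ` B)"
    and "\<And>a b. a \<in> A \<Longrightarrow> b \<in> B \<Longrightarrow> c \<le> f a + g b"
  shows "c \<le> (INF a\<in>A. f a) + (INF b\<in>B. g b)"
proof -
  have "c - g b \<le> (INF a\<in>A. f a)" if "b \<in> B" for b
    by (rule cINF_greatest[OF assms(1)]) (use assms(5) that in force)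
  then have "c - (INF a\<in>A. f a) \<le> (INF b\<in>B. g b)"
    by (intro cINF_greatest[OF assms(2)]) force
  then show ?thesis by simp
qed

lemma INF_mult_left_nonneg:
  fixes f :: "'a \<Rightarrow> real"
  assumes c: "0 \<le> c" and A: "A \<noteq> {}" and bdd: "bdd_below (f ` A)"
  shows "(INF a\<in>A. c * f a) = c * (INF a\<in>A. f a)"
proof (cases "c = 0")
  case True
  then show ?thesis using A by simp
next
  case False
  then have c: "0 < c" using c by simp
  obtain M where M: "\<And>a. a \<in> A \<Longrightarrow> M \<le> f a" using bdd unfolding bdd_below_def by auto
  have bdd': "bdd_below ((\<lambda>a. c * f a) ` A)"
    by (rule bdd_belowI2[of A "c * M"]) (use M c in simp)
  have "c * (INF a\<in>A. f a) \<le> (INF a\<in>A. c * f a)"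
    by (rule cINF_greatest[OF A]) (use cINF_lower[OF bdd] c in simp)
  moreover have "(INF a\<in>A. c * f a) / c \<le> (INF a\<in>A. f a)"
    by (rule cINF_greatest[OF A]) (use cINF_lower[OF bdd'] c in \<open>simp add: divide_le_eq mult.commute\<close>)
  ultimately show ?thesis using c by (simp add: divide_le_eq mult.commute)
qed

definition linf_sublinear :: "((nat \<Rightarrow> real) \<Rightarrow> real) \<Rightarrow> bool" where
  "linf_sublinear q \<longleftrightarrow> (\<forall>x\<in>linf. \<forall>y\<in>linf. q (\<lambda>n. x n + y n) \<le> q x + q y)
     \<and> (\<forall>c\<ge>0. \<forall>x\<in>linf. q (\<lambda>n. c * x n) = c * q x)"

context
  fixes q
  assumes q: "linf_sublinear q"
begin

lemma linf_sublinear_add: "x \<in> linf \<Longrightarrow> y \<in> linf \<Longrightarrow> q (\<lambda>n. x n + y n) \<le> q x + q y"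
  using q unfolding linf_sublinear_def by blast

lemma linf_sublinear_mult: "x \<in> linf \<Longrightarrow> 0 \<le> c \<Longrightarrow> q (\<lambda>n. c * x n) = c * q x"
  using q unfolding linf_sublinear_def by blast

lemma linf_sublinear_zero: "q (\<lambda>n. 0) = 0"
  using linf_sublinear_mult[of "\<lambda>n. 0" 0] linf_const[of 0] by simp

lemma linf_sublinear_uminus_le: "x \<in> linf \<Longrightarrow> - q (\<lambda>n. - x n) \<le> q x"
  using linf_sublinear_add[of x "\<lambda>n. - x n"] linf_sublinear_zero linf_uminus[of x] by simp

end

text \<open>Tilting is the device of the Zorn's lemma proof of Hahn--Banach: \<open>tilt q y\<close> is again
  sublinear and below \<open>q\<close>, and \<open>tilt q y x \<le> q (x + y) - q y\<close>, so a sublinear functional equal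
  to all its tilts is superadditive.\<close>
definition tilt :: "((nat \<Rightarrow> real) \<Rightarrow> real) \<Rightarrow> (nat \<Rightarrow> real) \<Rightarrow> (nat \<Rightarrow> real) \<Rightarrow> real" where
  "tilt q y x = (if x \<in> linf then (INF t\<in>{0..}. q (\<lambda>n. x n + t * y n) - t * q y) else 0)"

lemma tilt_outside: "x \<notin> linf \<Longrightarrow> tilt q y x = 0"
  unfolding tilt_def by simp

context
  fixes q y
  assumes q: "linf_sublinear q" and y: "y \<in> linf"
begin

lemma tilt_term_lower_bound:
  assumes x: "x \<in> linf" and t: "0 \<le> t"
  shows "- q (\<lambda>n. - x n) \<le> q (\<lambda>n. x n + t * y n) - t * q y"
proof -
  have "(\<lambda>n. t * y n) = (\<lambda>n. (x n + t * y n) + - x n)" by simp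
  then have "q (\<lambda>n. t * y n) \<le> q (\<lambda>n. x n + t * y n) + q (\<lambda>n. - x n)"
    using linf_sublinear_add[OF q linf_add[OF x linf_mult[OF y]] linf_uminus[OF x]] by simp
  then show ?thesis using linf_sublinear_mult[OF q y t] by simp
qed

lemma tilt_bdd_below: "x \<in> linf \<Longrightarrow> bdd_below ((\<lambda>t. q (\<lambda>n. x n + t * y n) - t * q y) ` {0..})"
  unfolding bdd_below_def using tilt_term_lower_bound by auto

lemma tilt_le: "x \<in> linf \<Longrightarrow> 0 \<le> t \<Longrightarrow> tilt q y x \<le> q (\<lambda>n. x n + t * y n) - t * q y"
  unfolding tilt_def using cINF_lower[OF tilt_bdd_below] by simp

lemma le_tilt:
  "x \<in> linf \<Longrightarrow> (\<And>t. 0 \<le> t \<Longrightarrow> c \<le> q (\<lambda>n. x n + t * y n) - t * q y) \<Longrightarrow> c \<le> tilt q y x"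
  unfolding tilt_def by (simp, rule cINF_greatest) auto

lemma tilt_le_self: "x \<in> linf \<Longrightarrow> tilt q y x \<le> q x"
  using tilt_le[of x 0] by simp

lemma tilt_uminus_direction: "tilt q y (\<lambda>n. - y n) \<le> - q y"
  using tilt_le[OF linf_uminus[OF y], of 1] linf_sublinear_zero[OF q] by simp

lemma tilt_add:
  assumes x1: "x1 \<in> linf" and x2: "x2 \<in> linf"
  shows "tilt q y (\<lambda>n. x1 n + x2 n) \<le> tilt q y x1 + tilt q y x2"
proof -
  have "tilt q y (\<lambda>n. x1 n + x2 n) \<le>
      (INF t\<in>{0..}. q (\<lambda>n. x1 n + t * y n) - t * q y) + (INF t\<in>{0..}. q (\<lambda>n. x2 n + t * y n) - t * q y)"
  proof (rule le_INF_add_INF)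
    fix a b :: real assume ab: "a \<in> {0..}" "b \<in> {0..}"
    have "tilt q y (\<lambda>n. x1 n + x2 n) \<le> q (\<lambda>n. (x1 n + x2 n) + (a + b) * y n) - (a + b) * q y"
      using tilt_le[OF linf_add[OF x1 x2]] ab by simp
    also have "(\<lambda>n. (x1 n + x2 n) + (a + b) * y n) = (\<lambda>n. (x1 n + a * y n) + (x2 n + b * y n))"
      by (simp add: algebra_simps)
    also have "q \<dots> \<le> q (\<lambda>n. x1 n + a * y n) + q (\<lambda>n. x2 n + b * y n)"
      by (intro linf_sublinear_add[OF q] linf_add linf_mult x1 x2 y)
    finally show "tilt q y (\<lambda>n. x1 n + x2 n) \<le> (q (\<lambda>n. x1 n + a * y n) - a * q y) + (q (\<lambda>n. x2 n + b * y n) - b * q y)"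
      by (simp add: algebra_simps)
  qed (use tilt_bdd_below x1 x2 in auto)
  then show ?thesis unfolding tilt_def using x1 x2 by simp
qed

lemma tilt_mult:
  assumes x: "x \<in> linf" and c: "0 < c"
  shows "tilt q y (\<lambda>n. c * x n) = c * tilt q y x"
proof -
  have scale: "q (\<lambda>n. c * x n + (c * s) * y n) - (c * s) * q y = c * (q (\<lambda>n. x n + s * y n) - s * q y)"
    if "0 \<le> s" for s
  proof -
    have "(\<lambda>n. c * x n + (c * s) * y n) = (\<lambda>n. c * (x n + s * y n))" by (simp add: algebra_simps)
    then show ?thesis
      using linf_sublinear_mult[OF q linf_add[OF x linf_mult[OF y]], of c s] c by (simp add: algebra_simps)
  qed
  have "tilt q y (\<lambda>n. c * x n) / c \<le> tilt q y x"
  proof (rule le_tilt[OF x])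
    fix s :: real assume s: "0 \<le> s"
    have "tilt q y (\<lambda>n. c * x n) \<le> c * (q (\<lambda>n. x n + s * y n) - s * q y)"
      using tilt_le[OF linf_mult[OF x], of "c * s" c] scale[OF s] s c by simp
    then show "tilt q y (\<lambda>n. c * x n) / c \<le> q (\<lambda>n. x n + s * y n) - s * q y"
      using c by (simp add: divide_le_eq mult.commute)
  qed
  moreover have "c * tilt q y x \<le> tilt q y (\<lambda>n. c * x n)"
  proof (rule le_tilt[OF linf_mult[OF x]])
    fix t :: real assume t: "0 \<le> t"
    have "c * tilt q y x \<le> c * (q (\<lambda>n. x n + (t / c) * y n) - (t / c) * q y)"
      using tilt_le[OF x, of "t / c"] t c by simp
    then show "c * tilt q y x \<le> q (\<lambda>n. c * x n + t * y n) - t * q y"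
      using scale[of "t / c"] t c by simp
  qed
  ultimately show ?thesis using c by (simp add: divide_le_eq mult.commute)
qed

lemma tilt_sublinear: "linf_sublinear (tilt q y)"
  unfolding linf_sublinear_def
proof (intro conjI ballI allI impI)
  fix c :: real and x assume c: "0 \<le> c" and x: "x \<in> linf"
  show "tilt q y (\<lambda>n. c * x n) = c * tilt q y x"
  proof (cases "c = 0")
    case True
    have "tilt q y (\<lambda>n. 0) = 0"
      using linf_const[of 0] linf_sublinear_mult[OF q y] unfolding tilt_def by simp
    then show ?thesis using True by simp
  qed (use tilt_mult[OF x] c in simp)
qed (rule tilt_add)

end

lemma linf_linear_if_tilt_fixed:
  assumes q: "linf_sublinear q" and fixed: "\<And>y. y \<in> linf \<Longrightarrow> tilt q y = q"
  shows "linf_linear q"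
proof -
  have add: "q (\<lambda>n. x n + y n) = q x + q y" if x: "x \<in> linf" and y: "y \<in> linf" for x y
    using tilt_le[OF q y x, of 1] fixed[OF y] linf_sublinear_add[OF q x y] by simp
  have uminus: "q (\<lambda>n. - x n) = - q x" if x: "x \<in> linf" for x
    using add[OF x linf_uminus[OF x]] linf_sublinear_zero[OF q] by simp
  show ?thesis
    unfolding linf_linear_def
  proof (intro conjI ballI allI)
    fix c :: real and x assume x: "x \<in> linf"
    show "q (\<lambda>n. c * x n) = c * q x"
    proof (cases "0 \<le> c")
      case False
      then have "q (\<lambda>n. - ((- c) * x n)) = - ((- c) * q x)"
        using uminus[OF linf_mult[OF x]] linf_sublinear_mult[OF q x, of "- c"] by simp
      then show ?thesis by simp
    qed (rule linf_sublinear_mult[OF q x])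
  qed (rule add)
qed

lemma INF_chain_linf_sublinear:
  assumes ne: "C \<noteq> {}" and sub: "\<And>q. q \<in> C \<Longrightarrow> linf_sublinear q"
    and chain: "\<And>q1 q2. q1 \<in> C \<Longrightarrow> q2 \<in> C \<Longrightarrow> (\<forall>x. q1 x \<le> q2 x) \<or> (\<forall>x. q2 x \<le> q1 x)"
    and bdd: "\<And>x. x \<in> linf \<Longrightarrow> bdd_below ((\<lambda>q. q x) ` C)"
  shows "linf_sublinear (\<lambda>x. INF q\<in>C. q x)"
  unfolding linf_sublinear_def
proof (intro conjI ballI allI impI)
  fix x y assume x: "x \<in> linf" and y: "y \<in> linf"
  show "(INF q\<in>C. q (\<lambda>n. x n + y n)) \<le> (INF q\<in>C. q x) + (INF q\<in>C. q y)"
  proof (rule le_INF_add_INF[OF ne ne bdd[OF x] bdd[OF y]])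
    fix a b assume ab: "a \<in> C" "b \<in> C"
    have "(INF q\<in>C. q (\<lambda>n. x n + y n)) \<le> min (a x + a y) (b x + b y)"
      using cINF_lower[OF bdd[OF linf_add[OF x y]]] ab
        linf_sublinear_add[OF sub x y, of a] linf_sublinear_add[OF sub x y, of b]
      by (simp, meson order_trans)
    moreover have "a x + a y \<le> a x + b y \<or> b x + b y \<le> a x + b y"
      using chain[OF ab] by auto
    ultimately show "(INF q\<in>C. q (\<lambda>n. x n + y n)) \<le> a x + b y"
      by linarith
  qed
next
  fix c :: real and x assume c: "0 \<le> c" and x: "x \<in> linf"
  have "(INF q\<in>C. q (\<lambda>n. c * x n)) = (INF q\<in>C. c * q x)"
    using linf_sublinear_mult[OF sub x c] by simp
  also have "\<dots> = c * (INF q\<in>C. q x)" by (rule INF_mult_left_nonneg[OF c ne bdd[OF x]])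
  finally show "(INF q\<in>C. q (\<lambda>n. c * x n)) = c * (INF q\<in>C. q x)" .
qed

text \<open>The side condition at \<open>x\<^sub>0\<close> is preserved by tilting and passes to the minimal element
  produced by Zorn's lemma, which is linear because it equals all its tilts.\<close>
definition sublinear_minorants ::
  "((nat \<Rightarrow> real) \<Rightarrow> real) \<Rightarrow> (nat \<Rightarrow> real) \<Rightarrow> ((nat \<Rightarrow> real) \<Rightarrow> real) set" where
  "sublinear_minorants p x0 = {q. linf_sublinear q \<and> (\<forall>x\<in>linf. q x \<le> p x)
     \<and> q x0 \<le> - p (\<lambda>n. - x0 n) \<and> (\<forall>x. x \<notin> linf \<longrightarrow> q x = 0)}"

context
  fixes p x0
  assumes p: "linf_sublinear p" and x0: "x0 \<in> linf"
begin

lemma sublinear_minorants_lower_bound: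
  "q \<in> sublinear_minorants p x0 \<Longrightarrow> x \<in> linf \<Longrightarrow> - p (\<lambda>n. - x n) \<le> q x"
  using linf_sublinear_uminus_le[of q x] linf_uminus[of x] unfolding sublinear_minorants_def by force

lemma tilt_in_sublinear_minorants:
  assumes q: "q \<in> sublinear_minorants p x0" and y: "y \<in> linf"
  shows "tilt q y \<in> sublinear_minorants p x0"
proof -
  have q_sub: "linf_sublinear q" using q unfolding sublinear_minorants_def by blast
  have le_q: "tilt q y x \<le> q x" if "x \<in> linf" for x by (rule tilt_le_self[OF q_sub y that])
  show ?thesis
    unfolding sublinear_minorants_def
  proof (intro CollectI conjI ballI allI impI)
    show "linf_sublinear (tilt q y)" by (rule tilt_sublinear[OF q_sub y])
    show "tilt q y x \<le> p x" if "x \<in> linf" for x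
      using le_q[OF that] q that unfolding sublinear_minorants_def by force
    show "tilt q y x0 \<le> - p (\<lambda>n. - x0 n)"
      using le_q[OF x0] q unfolding sublinear_minorants_def by force
    show "tilt q y x = 0" if "x \<notin> linf" for x by (rule tilt_outside[OF that])
  qed
qed

lemma sublinear_minorants_nonempty: "tilt p (\<lambda>n. - x0 n) \<in> sublinear_minorants p x0"
proof -
  have mx0: "(\<lambda>n. - x0 n) \<in> linf" by (rule linf_uminus[OF x0])
  have "tilt p (\<lambda>n. - x0 n) x0 \<le> - p (\<lambda>n. - x0 n)"
    using tilt_uminus_direction[OF p mx0] by simp
  then show ?thesis
    unfolding sublinear_minorants_def
    using tilt_sublinear[OF p mx0] tilt_le_self[OF p mx0] tilt_outside[of _ p "\<lambda>n. - x0 n"]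
    by simp
qed

lemma sublinear_minorants_chain_INF:
  assumes C: "C \<noteq> {}" "C \<subseteq> sublinear_minorants p x0"
    and chain: "\<forall>q1\<in>C. \<forall>q2\<in>C. (\<forall>x. q1 x \<le> q2 x) \<or> (\<forall>x. q2 x \<le> q1 x)"
  defines "u \<equiv> \<lambda>x. if x \<in> linf then (INF q\<in>C. q x) else 0"
  shows "u \<in> sublinear_minorants p x0" and "\<And>q x. q \<in> C \<Longrightarrow> u x \<le> q x"
proof -
  have bdd: "bdd_below ((\<lambda>q. q x) ` C)" if "x \<in> linf" for x
    by (rule bdd_belowI2[of C "- p (\<lambda>n. - x n)"]) (use sublinear_minorants_lower_bound C that in auto)
  show u_le: "u x \<le> q x" if "q \<in> C" for q x
    using cINF_lower[OF bdd that] that C unfolding u_def sublinear_minorants_def by auto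
  have "linf_sublinear (\<lambda>x. INF q\<in>C. q x)"
    by (rule INF_chain_linf_sublinear[OF C(1)]) (use C bdd chain in \<open>auto simp: sublinear_minorants_def\<close>)
  then have "linf_sublinear u"
    unfolding linf_sublinear_def u_def by (simp add: linf_add linf_mult)
  moreover obtain a where a: "a \<in> C" using C(1) by blast
  moreover have "u x \<le> p x" if "x \<in> linf" for x
    using u_le[OF a, of x] a C that unfolding sublinear_minorants_def by force
  moreover have "u x0 \<le> - p (\<lambda>n. - x0 n)"
    using u_le[OF a, of x0] a C unfolding sublinear_minorants_def by force
  ultimately show "u \<in> sublinear_minorants p x0"
    unfolding sublinear_minorants_def u_def by simp
qed

lemma exists_minimal_sublinear_minorant:
  obtains m where "m \<in> sublinear_minorants p x0"
    "\<And>q. q \<in> sublinear_minorants p x0 \<Longrightarrow> (\<forall>x. q x \<le> m x) \<Longrightarrow> q = m"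
proof -
  define below where "below = (\<lambda>q1 q2 :: (nat \<Rightarrow> real) \<Rightarrow> real. \<forall>x. q2 x \<le> q1 x)"
  have "\<exists>m\<in>sublinear_minorants p x0. \<forall>q\<in>sublinear_minorants p x0. below m q \<longrightarrow> q = m"
  proof (rule predicate_Zorn)
    show "partial_order_on (sublinear_minorants p x0) (relation_of below (sublinear_minorants p x0))"
      by (rule partial_order_on_relation_ofI) (auto simp: below_def intro: order_trans intro!: ext antisym)
  next
    fix C assume C: "C \<in> Chains (relation_of below (sublinear_minorants p x0))"
    have sub: "C \<subseteq> sublinear_minorants p x0" using Chains_relation_of[OF C] .
    have chain: "\<forall>q1\<in>C. \<forall>q2\<in>C. (\<forall>x. q1 x \<le> q2 x) \<or> (\<forall>x. q2 x \<le> q1 x)"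
      using C unfolding Chains_def relation_of_def below_def by blast
    show "\<exists>u\<in>sublinear_minorants p x0. \<forall>q\<in>C. below q u"
    proof (cases "C = {}")
      case False
      note u = sublinear_minorants_chain_INF[OF False sub chain]
      show ?thesis unfolding below_def by (rule bexI[OF _ u(1)]) (use u(2) in auto)
    qed (use sublinear_minorants_nonempty in blast)
  qed
  then show ?thesis using that unfolding below_def by blast
qed

end

theorem hahn_banach_linf:
  assumes p: "linf_sublinear p" and x0: "x0 \<in> linf"
  shows "\<exists>\<mu>. linf_linear \<mu> \<and> (\<forall>x\<in>linf. \<mu> x \<le> p x) \<and> \<mu> x0 = - p (\<lambda>n. - x0 n)
    \<and> (\<forall>x. x \<notin> linf \<longrightarrow> \<mu> x = 0)"
proof -
  obtain m where m: "m \<in> sublinear_minorants p x0"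
    and minimal: "\<And>q. q \<in> sublinear_minorants p x0 \<Longrightarrow> (\<forall>x. q x \<le> m x) \<Longrightarrow> q = m"
    using exists_minimal_sublinear_minorant[OF p x0] by blast
  have m_sub: "linf_sublinear m" using m unfolding sublinear_minorants_def by blast
  have "tilt m y = m" if y: "y \<in> linf" for y
  proof (rule minimal[OF tilt_in_sublinear_minorants[OF p x0 m y]])
    show "\<forall>x. tilt m y x \<le> m x"
    proof
      fix x show "tilt m y x \<le> m x"
        using tilt_le_self[OF m_sub y, of x] tilt_outside[of x m y] m unfolding sublinear_minorants_def
        by (cases "x \<in> linf") auto
    qed
  qed
  then have "linf_linear m" by (rule linf_linear_if_tilt_fixed[OF m_sub])
  moreover have "m x0 = - p (\<lambda>n. - x0 n)"
    using sublinear_minorants_lower_bound[OF p x0 m x0] m unfolding sublinear_minorants_def by simp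
  ultimately show ?thesis using m unfolding sublinear_minorants_def by blast
qed

section \<open>Separating a linear functional from a compact convex set\<close>

lemma closed_Collect_ball: "(\<And>x. x \<in> S \<Longrightarrow> closed {\<mu>. P \<mu> x}) \<Longrightarrow> closed {\<mu>. \<forall>x\<in>S. P \<mu> x}"
  using closed_INT[of S "\<lambda>x. {\<mu>. P \<mu> x}"] by (simp add: Collect_ball_eq)

lemma continuous_on_eval: "continuous_on S (\<lambda>\<mu>::(nat \<Rightarrow> real) \<Rightarrow> real. \<mu> x)"
  by (rule continuous_on_subset[OF continuous_on_product_coordinates]) simp

text \<open>First-order optimality of the point of \<open>D\<close> nearest to \<open>\<mu>\<close> in the finitely many
  coordinates \<open>F\<close>: moving towards any other \<open>\<nu> \<in> D\<close> cannot decrease the distance.\<close>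
lemma nearest_point_inequality:
  fixes D :: "((nat \<Rightarrow> real) \<Rightarrow> real) set" and \<mu> :: "(nat \<Rightarrow> real) \<Rightarrow> real"
    and F :: "(nat \<Rightarrow> real) set"
  defines "dist\<^sub>F \<equiv> \<lambda>\<nu>. \<Sum>x\<in>F. (\<nu> x - \<mu> x)\<^sup>2"
  assumes cv: "convex_fun_set D" and \<nu>\<^sub>0: "\<nu>\<^sub>0 \<in> D" "\<And>\<nu>. \<nu> \<in> D \<Longrightarrow> dist\<^sub>F \<nu>\<^sub>0 \<le> dist\<^sub>F \<nu>"
    and \<nu>: "\<nu> \<in> D"
  shows "0 \<le> (\<Sum>x\<in>F. (\<nu>\<^sub>0 x - \<mu> x) * (\<nu> x - \<nu>\<^sub>0 x))"
proof (rule ccontr)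
  define S where "S = (\<Sum>x\<in>F. (\<nu>\<^sub>0 x - \<mu> x) * (\<nu> x - \<nu>\<^sub>0 x))"
  define Q where "Q = (\<Sum>x\<in>F. (\<nu> x - \<nu>\<^sub>0 x)\<^sup>2)"
  assume "\<not> 0 \<le> (\<Sum>x\<in>F. (\<nu>\<^sub>0 x - \<mu> x) * (\<nu> x - \<nu>\<^sub>0 x))"
  then have S: "S < 0" unfolding S_def by simp
  have Q: "0 \<le> Q" unfolding Q_def by (intro sum_nonneg) auto
  define t where "t = (if Q = 0 then 1 else min 1 (- S / Q))"
  have t: "0 < t" "t \<le> 1" unfolding t_def using S Q by (auto simp: divide_less_0_iff)
  have tQ: "t * Q \<le> - S"
  proof (cases "Q = 0")
    case False
    then have "t * Q \<le> (- S / Q) * Q" unfolding t_def using Q by (intro mult_right_mono) auto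
    then show ?thesis using False by simp
  qed (use S t_def in simp)
  have "(\<lambda>x. t * \<nu> x + (1 - t) * \<nu>\<^sub>0 x) \<in> D"
    using cv \<nu> \<nu>\<^sub>0(1) t unfolding convex_fun_set_def by auto
  then have "dist\<^sub>F \<nu>\<^sub>0 \<le> dist\<^sub>F (\<lambda>x. t * \<nu> x + (1 - t) * \<nu>\<^sub>0 x)" by (rule \<nu>\<^sub>0(2))
  also have "\<dots> = (\<Sum>x\<in>F. (\<nu>\<^sub>0 x - \<mu> x)\<^sup>2 + 2 * t * ((\<nu>\<^sub>0 x - \<mu> x) * (\<nu> x - \<nu>\<^sub>0 x)) + t\<^sup>2 * (\<nu> x - \<nu>\<^sub>0 x)\<^sup>2)"
    unfolding dist\<^sub>F_def by (rule sum.cong) (auto simp: power2_eq_square algebra_simps)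
  also have "\<dots> = dist\<^sub>F \<nu>\<^sub>0 + 2 * t * S + t\<^sup>2 * Q"
    unfolding dist\<^sub>F_def S_def Q_def by (simp add: sum.distrib sum_distrib_left)
  finally have "0 \<le> t * (2 * S + t * Q)" by (simp add: power2_eq_square algebra_simps)
  then have "0 \<le> 2 * S + t * Q" using t(1) by (simp add: zero_le_mult_iff)
  then show False using tQ S by linarith
qed

lemma compact_finitely_many_separating_coordinates:
  fixes D :: "((nat \<Rightarrow> real) \<Rightarrow> real) set"
  assumes "compact D" "\<mu> \<notin> D" "\<And>\<nu> x. \<nu> \<in> D \<Longrightarrow> x \<notin> linf \<Longrightarrow> \<nu> x = \<mu> x"
  obtains F where "F \<subseteq> linf" "finite F" "\<And>\<nu>. \<nu> \<in> D \<Longrightarrow> \<exists>x\<in>F. \<nu> x \<noteq> \<mu> x"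
proof -
  have cover: "D \<subseteq> (\<Union>x\<in>linf. {\<nu>. \<nu> x \<noteq> \<mu> x})"
  proof
    fix \<nu> assume "\<nu> \<in> D"
    then obtain x where "\<nu> x \<noteq> \<mu> x" using assms(2) by (metis ext)
    then show "\<nu> \<in> (\<Union>x\<in>linf. {\<nu>. \<nu> x \<noteq> \<mu> x})" using assms(3)[OF \<open>\<nu> \<in> D\<close>] by blast
  qed
  have "open {\<nu>::(nat \<Rightarrow> real) \<Rightarrow> real. \<nu> x \<noteq> \<mu> x}" for x
    by (rule open_Collect_neq[OF continuous_on_eval continuous_on_const])
  then obtain F where "F \<subseteq> linf" "finite F" "D \<subseteq> (\<Union>x\<in>F. {\<nu>. \<nu> x \<noteq> \<mu> x})"
    by (rule compactE_image[OF assms(1) _ cover])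
  then show ?thesis using that by blast
qed

text \<open>In finitely many coordinates separating \<open>\<mu>\<close> from \<open>D\<close>, the difference between the point
  of \<open>D\<close> nearest to \<open>\<mu>\<close> and \<open>\<mu>\<close> itself is a separating direction.\<close>
lemma separate_compact_convex:
  fixes D :: "((nat \<Rightarrow> real) \<Rightarrow> real) set"
  assumes D: "compact D" "convex_fun_set D" "D \<noteq> {}"
    and D_lin: "\<And>\<nu>. \<nu> \<in> D \<Longrightarrow> linf_linear \<nu> \<and> (\<forall>x. x \<notin> linf \<longrightarrow> \<nu> x = 0)"
    and \<mu>: "linf_linear \<mu>" "\<forall>x. x \<notin> linf \<longrightarrow> \<mu> x = 0" "\<mu> \<notin> D"
  shows "\<exists>z\<in>linf. \<forall>\<nu>\<in>D. \<mu> z < \<nu> z"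
proof -
  obtain F where F: "F \<subseteq> linf" "finite F" "\<And>\<nu>. \<nu> \<in> D \<Longrightarrow> \<exists>x\<in>F. \<nu> x \<noteq> \<mu> x"
    by (rule compact_finitely_many_separating_coordinates[OF D(1) \<mu>(3)]) (use D_lin \<mu>(2) in auto)
  define dist\<^sub>F where "dist\<^sub>F = (\<lambda>\<nu>::(nat \<Rightarrow> real) \<Rightarrow> real. \<Sum>x\<in>F. (\<nu> x - \<mu> x)\<^sup>2)"
  have "continuous_on D dist\<^sub>F" unfolding dist\<^sub>F_def by (intro continuous_intros continuous_on_eval)
  then obtain \<nu>\<^sub>0 where \<nu>\<^sub>0: "\<nu>\<^sub>0 \<in> D" "\<And>\<nu>. \<nu> \<in> D \<Longrightarrow> dist\<^sub>F \<nu>\<^sub>0 \<le> dist\<^sub>F \<nu>"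
    using continuous_attains_inf[OF D(1,3)] by metis
  define a where "a = (\<lambda>x. \<nu>\<^sub>0 x - \<mu> x)"
  define z where "z = (\<lambda>n. \<Sum>x\<in>F. a x * x n)"
  have z: "z \<in> linf" unfolding z_def by (rule linf_sum[OF F(2)]) (use F(1) in \<open>auto intro: linf_mult\<close>)
  have diff_z: "\<xi> z - \<nu>\<^sub>0 z = (\<Sum>x\<in>F. a x * (\<xi> x - \<nu>\<^sub>0 x))" if "linf_linear \<xi>" for \<xi>
  proof -
    have "\<zeta> z = (\<Sum>x\<in>F. a x * \<zeta> x)" if "linf_linear \<zeta>" for \<zeta>
      unfolding z_def using F by (intro linf_linear_sum_mult[OF that]) auto
    then show ?thesis using that D_lin[OF \<nu>\<^sub>0(1)] by (simp add: sum_subtractf right_diff_distrib)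
  qed
  have "0 < dist\<^sub>F \<nu>\<^sub>0"
  proof -
    obtain x where "x \<in> F" "\<nu>\<^sub>0 x \<noteq> \<mu> x" using F(3) \<nu>\<^sub>0(1) by blast
    then have "0 < (\<nu>\<^sub>0 x - \<mu> x)\<^sup>2" by simp
    also have "\<dots> \<le> dist\<^sub>F \<nu>\<^sub>0"
      unfolding dist\<^sub>F_def by (rule member_le_sum[OF \<open>x \<in> F\<close>]) (auto simp: F(2))
    finally show ?thesis .
  qed
  moreover have "\<mu> z - \<nu>\<^sub>0 z = - dist\<^sub>F \<nu>\<^sub>0"
  proof -
    have "\<mu> z - \<nu>\<^sub>0 z = (\<Sum>x\<in>F. - ((\<nu>\<^sub>0 x - \<mu> x)\<^sup>2))"
      unfolding diff_z[OF \<mu>(1)] a_def by (rule sum.cong) (auto simp: power2_eq_square algebra_simps)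
    then show ?thesis unfolding dist\<^sub>F_def by (simp add: sum_negf)
  qed
  moreover have "\<nu>\<^sub>0 z \<le> \<nu> z" if "\<nu> \<in> D" for \<nu>
    using diff_z[of \<nu>] D_lin[OF that] nearest_point_inequality[OF D(2) \<nu>\<^sub>0[unfolded dist\<^sub>F_def] that]
    unfolding a_def by simp
  ultimately show ?thesis using z by force
qed

section \<open>The core of the constant equivalent\<close>

definition maxmin_representation ::
  "((nat \<Rightarrow> real) \<Rightarrow> (nat \<Rightarrow> real) \<Rightarrow> bool) \<Rightarrow> ((nat \<Rightarrow> real) \<Rightarrow> real) set \<Rightarrow> bool" where
  "maxmin_representation R D \<longleftrightarrow> D \<noteq> {} \<and> convex_fun_set D \<and> compact D \<and> D \<subseteq> pa_N \<inter> Delta_N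
     \<and> (\<forall>x\<in>linf. \<exists>\<mu>\<in>D. \<forall>\<nu>\<in>D. \<mu> x \<le> \<nu> x)
     \<and> constant_equivalent R (lower_envelope D)
     \<and> (\<forall>J. constant_equivalent R J \<longrightarrow> (\<forall>x\<in>linf. J x = lower_envelope D x))"

context preference_axioms
begin

lemma linf_sublinear_I_dual: "linf_sublinear (\<lambda>x. - I (\<lambda>n. - x n))"
  unfolding linf_sublinear_def
proof (intro conjI ballI allI impI)
  fix x y assume "x \<in> linf" "y \<in> linf"
  then have "I (\<lambda>n. - x n) + I (\<lambda>n. - y n) \<le> I (\<lambda>n. - x n + - y n)"
    by (intro I_superadd linf_uminus)
  then show "- I (\<lambda>n. - (x n + y n)) \<le> - I (\<lambda>n. - x n) + - I (\<lambda>n. - y n)" by simp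
next
  fix c :: real and x assume "0 \<le> c" "x \<in> linf"
  then have "I (\<lambda>n. c * - x n) = c * I (\<lambda>n. - x n)" by (intro I_mult linf_uminus)
  then show "- I (\<lambda>n. - (c * x n)) = c * - I (\<lambda>n. - x n)" by simp
qed

text \<open>A linear functional dominating \<open>I\<close> is automatically a bounded, positive, normalised and
  purely finitely additive charge: boundedness and normalisation come from \<open>I\<close> being squeezed
  between \<open>- sup_norm\<close> and \<open>sup_norm\<close>, and purity from the invariance of \<open>I\<close> under
  finite permutations.\<close>
lemma pa_N_Delta_N_if_dominates_I:
  assumes lin: "linf_linear \<mu>" and ge: "\<forall>x\<in>linf. I x \<le> \<mu> x" and zero: "\<forall>x. x \<notin> linf \<longrightarrow> \<mu> x = 0"
  shows "\<mu> \<in> pa_N \<inter> Delta_N"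
proof -
  have le: "\<mu> x \<le> - I (\<lambda>n. - x n)" if x: "x \<in> linf" for x
    using ge linf_uminus[OF x] linf_linear_uminus[OF lin x] by force
  have "\<bar>\<mu> x\<bar> \<le> 1 * sup_norm x" if x: "x \<in> linf" for x
    using le[OF x] ge x I_ge_neg_sup_norm[OF x] I_ge_neg_sup_norm[OF linf_uminus[OF x]] sup_norm_uminus[of x]
    by force
  then have ba: "\<mu> \<in> ba_N" unfolding ba_N_def using lin zero unfolding linf_linear_def by blast
  have nonneg: "0 \<le> \<mu> (indicator A)" for A
  proof -
    have "I (\<lambda>n. 0) \<le> I (indicator A)"
      by (rule I_mono[OF linf_indicator linf_const]) (simp add: indicator_def)
    then show ?thesis using I_const ge linf_indicator[of A] by force
  qed
  have "1 \<le> \<mu> (\<lambda>n. 1)" "\<mu> (\<lambda>n. 1) \<le> 1"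
    using ge linf_const[of 1] le[OF linf_const[of 1]] I_const by force+
  then have one: "\<mu> (indicator UNIV) = 1" by simp
  have singleton: "\<mu> (indicator {n}) = 0" for n
  proof -
    have "0 \<le> \<mu> (\<lambda>m. - indicator {n} m)"
      using I_neg_indicator_nonneg[of n] ge linf_uminus[OF linf_indicator[of "{n}"]] by force
    then show ?thesis
      using nonneg[of "{n}"] linf_linear_uminus[OF lin linf_indicator, of "{n}"] by simp
  qed
  show ?thesis using ba nonneg one singleton unfolding pa_N_def Delta_N_def by blast
qed

definition core :: "((nat \<Rightarrow> real) \<Rightarrow> real) set" where
  "core = {\<mu> \<in> pa_N \<inter> Delta_N. \<forall>x\<in>linf. I x \<le> \<mu> x}"

lemma core_subset: "core \<subseteq> pa_N \<inter> Delta_N"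
  unfolding core_def by blast

lemma core_linf_linear: "\<mu> \<in> core \<Longrightarrow> linf_linear \<mu>"
  unfolding core_def by (auto intro: pa_N_linf_linear)

lemma core_outside: "\<mu> \<in> core \<Longrightarrow> x \<notin> linf \<Longrightarrow> \<mu> x = 0"
  unfolding core_def pa_N_def ba_N_def by auto

lemma core_supporting:
  assumes x0: "x0 \<in> linf"
  shows "\<exists>\<mu>\<in>core. \<mu> x0 = I x0"
proof -
  obtain \<mu> where lin: "linf_linear \<mu>" and le: "\<forall>x\<in>linf. \<mu> x \<le> - I (\<lambda>n. - x n)"
    and x0_eq: "\<mu> x0 = - (- I (\<lambda>n. - (- x0 n)))" and zero: "\<forall>x. x \<notin> linf \<longrightarrow> \<mu> x = 0"
    using hahn_banach_linf[OF linf_sublinear_I_dual x0] by blast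
  have ge: "\<forall>x\<in>linf. I x \<le> \<mu> x"
    using le linf_uminus linf_linear_uminus[OF lin] by force
  show ?thesis
    using pa_N_Delta_N_if_dominates_I[OF lin ge zero] ge x0_eq unfolding core_def by auto
qed

lemma core_nonempty: "core \<noteq> {}"
  using core_supporting[OF linf_const[of 0]] by blast

lemma core_min: "x \<in> linf \<Longrightarrow> \<exists>\<mu>\<in>core. \<forall>\<nu>\<in>core. \<mu> x \<le> \<nu> x"
  using core_supporting unfolding core_def by fastforce

lemma lower_envelope_core:
  assumes "x \<in> linf"
  shows "lower_envelope core x = I x"
proof -
  obtain \<mu> where "\<mu> \<in> core" "\<mu> x = I x" using core_supporting[OF assms] by blast
  moreover have "\<forall>\<nu>\<in>core. I x \<le> \<nu> x" using assms unfolding core_def by blast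
  ultimately show ?thesis
    unfolding lower_envelope_def by (intro cInf_eq_minimum) (auto intro: rev_image_eqI)
qed

lemma core_convex: "convex_fun_set core"
  unfolding convex_fun_set_def
proof (intro ballI allI impI)
  fix \<mu> \<nu> and t :: real assume \<mu>: "\<mu> \<in> core" and \<nu>: "\<nu> \<in> core" and t: "0 \<le> t \<and> t \<le> 1"
  define \<xi> where "\<xi> = (\<lambda>x. t * \<mu> x + (1 - t) * \<nu> x)"
  have lin: "linf_linear \<xi>"
    using core_linf_linear[OF \<mu>] core_linf_linear[OF \<nu>] unfolding linf_linear_def \<xi>_def
    by (simp add: algebra_simps)
  have ge: "\<forall>x\<in>linf. I x \<le> \<xi> x"
  proof
    fix x assume "x \<in> linf"
    then have "t * I x \<le> t * \<mu> x" "(1 - t) * I x \<le> (1 - t) * \<nu> x"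
      using \<mu> \<nu> t unfolding core_def by (auto intro: mult_left_mono)
    then show "I x \<le> \<xi> x" unfolding \<xi>_def by (simp add: algebra_simps)
  qed
  have "\<forall>x. x \<notin> linf \<longrightarrow> \<xi> x = 0" unfolding \<xi>_def using core_outside[OF \<mu>] core_outside[OF \<nu>] by simp
  then show "(\<lambda>x. t * \<mu> x + (1 - t) * \<nu> x) \<in> core"
    using pa_N_Delta_N_if_dominates_I[OF lin ge] ge unfolding core_def \<xi>_def by blast
qed

text \<open>The core lies in the box \<open>\<Pi> x. [I x, - I (- x)]\<close>, compact by Tychonoff, and is cut out
  of it by conditions on finitely many coordinates at a time.\<close>
lemma core_compact: "compact core"
proof -
  define a where "a = (\<lambda>x. if x \<in> linf then I x else 0)"
  define b where "b = (\<lambda>x. if x \<in> linf then - I (\<lambda>n. - x n) else 0)"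
  define K where "K = (PiE UNIV (\<lambda>x. {a x..b x}) :: ((nat \<Rightarrow> real) \<Rightarrow> real) set)"
  define C where "C = {\<mu>::(nat \<Rightarrow> real) \<Rightarrow> real.
       (\<forall>x\<in>linf. \<forall>y\<in>linf. \<mu> (\<lambda>n. x n + y n) = \<mu> x + \<mu> y)
     \<and> (\<forall>c. \<forall>x\<in>linf. \<mu> (\<lambda>n. c * x n) = c * \<mu> x)
     \<and> (\<forall>x\<in>-linf. \<mu> x = 0)
     \<and> (\<forall>x\<in>linf. I x \<le> \<mu> x)}"
  have "compactin (product_topology (\<lambda>_. euclidean) UNIV) K"
    unfolding K_def compactin_PiE by auto
  then have "compact K" unfolding euclidean_product_topology by simp
  moreover have "closed C"
    unfolding C_def
    by (intro closed_Collect_conj closed_Collect_ball closed_Collect_all closed_Collect_eq closed_Collect_le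
        continuous_intros continuous_on_eval)
  moreover have "core = K \<inter> C"
  proof (intro equalityI subsetI)
    fix \<mu> assume \<mu>: "\<mu> \<in> core"
    have "\<mu> x \<in> {a x..b x}" for x
      using \<mu> core_outside[OF \<mu>] linf_uminus[of x] linf_linear_uminus[OF core_linf_linear[OF \<mu>], of x]
      unfolding a_def b_def core_def by force
    then have "\<mu> \<in> K" unfolding K_def PiE_UNIV_domain by blast
    moreover have "\<mu> \<in> C"
      using \<mu> core_linf_linear[OF \<mu>] core_outside[OF \<mu>] unfolding C_def core_def linf_linear_def by auto
    ultimately show "\<mu> \<in> K \<inter> C" by blast
  next
    fix \<mu> assume "\<mu> \<in> K \<inter> C"
    then have "linf_linear \<mu>" "\<forall>x\<in>linf. I x \<le> \<mu> x" "\<forall>x. x \<notin> linf \<longrightarrow> \<mu> x = 0"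
      unfolding C_def linf_linear_def by auto
    then show "\<mu> \<in> core" using pa_N_Delta_N_if_dominates_I unfolding core_def by blast
  qed
  ultimately show ?thesis by (simp add: compact_Int_closed)
qed

lemma maxmin_representation_core: "maxmin_representation R core"
proof -
  have "constant_equivalent R (lower_envelope core)"
    using constant_equivalent_I lower_envelope_core unfolding constant_equivalent_def by simp
  moreover have "J x = lower_envelope core x" if "constant_equivalent R J" "x \<in> linf" for J x
    using constant_equivalent_unique[OF that] lower_envelope_core[OF that(2)] by simp
  ultimately show ?thesis
    unfolding maxmin_representation_def
    using core_nonempty core_convex core_compact core_subset core_min by blast
qed

lemma maxmin_representation_imp_core:
  assumes rep: "maxmin_representation R D"
  shows "D = core"
proof -
  have D: "D \<noteq> {}" "convex_fun_set D" "compact D" "D \<subseteq> pa_N \<inter> Delta_N"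
    "\<forall>x\<in>linf. \<exists>\<mu>\<in>D. \<forall>\<nu>\<in>D. \<mu> x \<le> \<nu> x"
    using rep unfolding maxmin_representation_def by blast+
  have I_eq: "lower_envelope D x = I x" if "x \<in> linf" for x
    using rep constant_equivalent_I that unfolding maxmin_representation_def by metis
  have "D \<subseteq> Delta_N" using D(4) by blast
  note envelope = lower_envelope_le[OF this D(5)] lower_envelope_attained[OF this D(5)]
  show ?thesis
  proof
    show "D \<subseteq> core" using D(4) envelope(1) I_eq unfolding core_def by auto
    show "core \<subseteq> D"
    proof
      fix \<mu> assume \<mu>: "\<mu> \<in> core"
      show "\<mu> \<in> D"
      proof (rule ccontr)
        assume "\<mu> \<notin> D"
        moreover have "linf_linear \<nu> \<and> (\<forall>x. x \<notin> linf \<longrightarrow> \<nu> x = 0)" if "\<nu> \<in> D" for \<nu>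
          using that D(4) unfolding pa_N_def ba_N_def linf_linear_def by auto
        ultimately obtain z where z: "z \<in> linf" "\<forall>\<nu>\<in>D. \<mu> z < \<nu> z"
          using separate_compact_convex[OF D(3,2,1) _ core_linf_linear[OF \<mu>]] core_outside[OF \<mu>] by blast
        obtain \<nu> where "\<nu> \<in> D" "I z = \<nu> z" using envelope(2)[OF z(1)] I_eq[OF z(1)] by auto
        then show False using z \<mu> unfolding core_def by force
      qed
    qed
  qed
qed

end

theorem preference_axioms_iff_maxmin_representation:
  "preference_axioms R \<longleftrightarrow> (\<exists>!D. maxmin_representation R D)"
proof
  assume "preference_axioms R"
  then interpret preference_axioms R .
  show "\<exists>!D. maxmin_representation R D"
    using maxmin_representation_core maxmin_representation_imp_core by (rule ex1I)
next
  assume "\<exists>!D. maxmin_representation R D"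
  then obtain D where "maxmin_representation R D" by (rule ex1E)
  then show "preference_axioms R"
    using axioms_if_lower_envelope_representation[of D R]
    unfolding maxmin_representation_def preference_axioms_def by blast
qed

theorem theorem6:
  fixes R :: "(nat \<Rightarrow> real) \<Rightarrow> (nat \<Rightarrow> real) \<Rightarrow> bool"
  shows "(weak_order R \<and> monotonicity R \<and> continuity R \<and> ICRP R \<and> convexity R
          \<and> ISU R \<and> IFPIS R)
    \<longleftrightarrow>
    (\<exists>!D. D \<noteq> {} \<and> convex_fun_set D \<and> compact D \<and> D \<subseteq> pa_N \<inter> Delta_N
       \<and> (\<forall>x\<in>linf. \<exists>\<mu>\<in>D. \<forall>\<nu>\<in>D. \<mu> x \<le> \<nu> x)
       \<and> constant_equivalent R (\<lambda>x. INF \<mu>\<in>D. \<mu> x)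
       \<and> (\<forall>J. constant_equivalent R J \<longrightarrow> (\<forall>x\<in>linf. J x = (INF \<mu>\<in>D. \<mu> x))))"
  using preference_axioms_iff_maxmin_representation[of R]
  unfolding preference_axioms_def maxmin_representation_def lower_envelope_def[abs_def]
  by (simp only: conj_assoc)

end
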